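(* Consider the gossip algorithm described in the context, under the standing assumptions stated there. Let $Z(k)=H\bar H\tilde x(k)$ and $\alpha_{k,\max}=\max_{i\in V}\alpha_{k,i}$. Then (i) $\sum_{k=0}^{\infty}\alpha_{k,\max}\|\tilde x(k)-Z(k)\|<\infty$ almost surely; (ii) $\sum_{k=0}^{\infty}\|\tilde x(k)-Z(k)\|^2<\infty$ almost surely.
   Context: Graphs and matrices. Let $V=\{1,\ldots,N\}$, $N\ge2$, and let $G_I=(V,E_I)$ (interference graph) be a connected undirected graph which is not complete, with adjacency matrix $A$; $B=A+I_N$. For $i\in V$: $N_I(i)$ is the neighbor set of $i$ in $G_I$, $\tilde N_I(i)=N_I(i)\cup\{i\}$, $m_i=\deg_{G_I}(i)+1$; $m=\sum_i m_i$. For $i,j\in V$: $s_{ij}=\sum_{l=1}^{j}B(i,l)+\sum_{r=1}^{i-1}m_r$; $E_j^i=e_{s_{ij}}\in\mathbb{R}^m$ if $j\in\tilde N_I(i)$, $E_j^i=\mathbf 0_m$ otherwise ($e_1,\dots,e_m$ standard basis of $\mathbb{R}^m$). $H=[\sum_iE_1^i,\ldots,\sum_iE_N^i]\in\mathbb{R}^{m\times N}$, $\bar H=\mathrm{diag}(1/m_1,\ldots,1/m_N)H^T$. The communication graph $G_C=(V,E_C)$ satisfies $G_m\subseteq G_C\subseteq G_I$ for a maximal triangle-free spanning subgraph $G_m$ of $G_I$ (triangle-free, spanning, and adding any edge of $G_I$ not in $G_m$ creates a triangle); $N_C(i)$ is the neighbor set of $i$ in $G_C$. $\mathrm{ind}(i,j)=\tilde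 N_I(i)\cap\tilde N_I(j)$ and $W_{ij}=I_m-\tfrac12\sum_{l\in\mathrm{ind}(i,j)}(E_l^i-E_l^j)(E_l^i-E_l^j)^T$. Game. Player $i$ has action set $\Omega_i\subset\mathbb{R}$, nonempty, compact and convex, and cost $J_i:\Omega^i\to\mathbb{R}$, $\Omega^i=\prod_{j\in\tilde N_I(i)}\Omega_j$, written $J_i(x_i,x_{-i}^i)$ with $x_{-i}^i\in\prod_{j\in N_I(i)}\Omega_j$; $J_i$ is continuously differentiable in $x_i$, jointly continuous in $x^i$, and convex in $x_i$ for every $x_{-i}^i$. $T_{\Omega_i}$ denotes Euclidean projection onto $\Omega_i$. Algorithm. The state is $\tilde x(k)\in\mathbb{R}^m$, whose entry at position $s_{ij}$ ($i\in V$, $j\in\tilde N_I(i)$) is $\tilde x_j^i(k)\in\Omega_j$, player $i$'s temporary estimate of player $j$'s action; the actions are $x_i(k)=\tilde x_i^i(k)$ and $x(k)=(x_1(k),\dots,x_N(k))$. Initial values $\tilde x^i(0)\in\Omega^i$ are arbitrary. At iteration $k$: $i_k$ is drawn uniformly from $V$ and $j_k$ uniformly from $N_C(i_k)$, independently of the past; $W(k)=W_{i_kj_k}$; $\bar x(k)=W(k)\tilde x(k)$; $\hat x_{-i}^i(k)=(\bar x_{s_{ij}}(k))_{j\in N_I(i)}$; for $i\in\{i_k,j_k\}$, $x_i(k+1)=T_{\Omega_i}[x_i(k)-\alpha_{k,i}\nabla_{x_i}J_i(x_i(k),\hat x_{-i}^i(k))]$, and $x_i(k+1)=x_i(k)$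 otherwise; then $\tilde x_j^i(k+1)=\bar x_{s_{ij}}(k)$ for $j\in N_I(i)$ and $\tilde x_i^i(k+1)=x_i(k+1)$. The step sizes are $\alpha_{k,i}=1/\nu_k(i)$, where $\nu_k(i)$ is the number of updates player $i$ has made up to time $k$; they satisfy $\sum_k\alpha_{k,i}^2<\infty$ and $\sum_k\alpha_{k,i}=\infty$ for all $i$. *)

theory Defs
  imports "HOL-Analysis.Analysis" "HOL-Probability.Probability"
begin

text \<open>Vertices are V = {1..N}. A graph on V is a relation (nat => nat => bool);
  vectors of R^m are functions nat => real read on the indices 1..m, and
  matrices are functions nat => nat => real read on the relevant index ranges.\<close>

definition nbI :: "(nat \<Rightarrow> nat \<Rightarrow> bool) \<Rightarrow> nat \<Rightarrow> nat \<Rightarrow> nat set" where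
  "nbI EI N i = {j \<in> {1..N}. EI i j}"

definition nbIt :: "(nat \<Rightarrow> nat \<Rightarrow> bool) \<Rightarrow> nat \<Rightarrow> nat \<Rightarrow> nat set" where
  "nbIt EI N i = insert i (nbI EI N i)"

definition mi :: "(nat \<Rightarrow> nat \<Rightarrow> bool) \<Rightarrow> nat \<Rightarrow> nat \<Rightarrow> nat" where
  "mi EI N i = card (nbI EI N i) + 1"

definition mtot :: "(nat \<Rightarrow> nat \<Rightarrow> bool) \<Rightarrow> nat \<Rightarrow> nat" where
  "mtot EI N = (\<Sum>i=1..N. mi EI N i)"

definition Bmat :: "(nat \<Rightarrow> nat \<Rightarrow> bool) \<Rightarrow> nat \<Rightarrow> nat \<Rightarrow> nat" where
  "Bmat EI i l = (if EI i l then 1 else 0) + (if i = l then 1 else 0)"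

definition spos :: "(nat \<Rightarrow> nat \<Rightarrow> bool) \<Rightarrow> nat \<Rightarrow> nat \<Rightarrow> nat \<Rightarrow> nat" where
  "spos EI N i j = (\<Sum>l=1..j. Bmat EI i l) + (\<Sum>r=1..<i. mi EI N r)"

definition Evec :: "(nat \<Rightarrow> nat \<Rightarrow> bool) \<Rightarrow> nat \<Rightarrow> nat \<Rightarrow> nat \<Rightarrow> nat \<Rightarrow> real" where
  "Evec EI N i j = (\<lambda>p. if j \<in> nbIt EI N i \<and> p = spos EI N i j then 1 else 0)"

definition ind :: "(nat \<Rightarrow> nat \<Rightarrow> bool) \<Rightarrow> nat \<Rightarrow> nat \<Rightarrow> nat \<Rightarrow> nat set" where
  "ind EI N i j = nbIt EI N i \<inter> nbIt EI N j"

definition Wmat :: "(nat \<Rightarrow> nat \<Rightarrow> bool) \<Rightarrow> nat \<Rightarrow> nat \<Rightarrow> nat \<Rightarrow> nat \<Rightarrow> nat \<Rightarrow> real" where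
  "Wmat EI N i j = (\<lambda>p q. (if p = q then 1 else 0)
      - 1/2 * (\<Sum>l\<in>ind EI N i j. (Evec EI N i l p - Evec EI N j l p) * (Evec EI N i l q - Evec EI N j l q)))"

definition Hmat :: "(nat \<Rightarrow> nat \<Rightarrow> bool) \<Rightarrow> nat \<Rightarrow> nat \<Rightarrow> nat \<Rightarrow> real" where
  "Hmat EI N = (\<lambda>p j. \<Sum>i=1..N. Evec EI N i j p)"

definition Hbar :: "(nat \<Rightarrow> nat \<Rightarrow> bool) \<Rightarrow> nat \<Rightarrow> nat \<Rightarrow> nat \<Rightarrow> real" where
  "Hbar EI N = (\<lambda>j p. (1 / real (mi EI N j)) * Hmat EI N p j)"

definition mv :: "nat \<Rightarrow> (nat \<Rightarrow> nat \<Rightarrow> real) \<Rightarrow> (nat \<Rightarrow> real) \<Rightarrow> nat \<Rightarrow> real" where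
  "mv n A x = (\<lambda>p. \<Sum>q=1..n. A p q * x q)"

definition vnorm :: "nat \<Rightarrow> (nat \<Rightarrow> real) \<Rightarrow> real" where
  "vnorm n v = sqrt (\<Sum>p=1..n. (v p)\<^sup>2)"

definition Zvec :: "(nat \<Rightarrow> nat \<Rightarrow> bool) \<Rightarrow> nat \<Rightarrow> (nat \<Rightarrow> real) \<Rightarrow> nat \<Rightarrow> real" where
  "Zvec EI N x = mv N (Hmat EI N) (mv (mtot EI N) (Hbar EI N) x)"

definition triangle_free :: "nat \<Rightarrow> (nat \<Rightarrow> nat \<Rightarrow> bool) \<Rightarrow> bool" where
  "triangle_free N G = (\<not> (\<exists>a\<in>{1..N}. \<exists>b\<in>{1..N}. \<exists>c\<in>{1..N}. G a b \<and> G b c \<and> G a c))"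

definition graph_on :: "nat \<Rightarrow> (nat \<Rightarrow> nat \<Rightarrow> bool) \<Rightarrow> bool" where
  "graph_on N G = (\<forall>i j. G i j \<longrightarrow> i \<in> {1..N} \<and> j \<in> {1..N} \<and> i \<noteq> j \<and> G j i)"

definition max_triangle_free_spanning :: "nat \<Rightarrow> (nat \<Rightarrow> nat \<Rightarrow> bool) \<Rightarrow> (nat \<Rightarrow> nat \<Rightarrow> bool) \<Rightarrow> bool" where
  "max_triangle_free_spanning N GI G =
     (graph_on N G \<and> (\<forall>i j. G i j \<longrightarrow> GI i j) \<and> triangle_free N G \<and>
      (\<forall>i j. GI i j \<and> \<not> G i j \<longrightarrow> \<not> triangle_free N (\<lambda>a b. G a b \<or> (a = i \<and> b = j) \<or> (a = j \<and> b = i))))"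

definition connected_graph :: "nat \<Rightarrow> (nat \<Rightarrow> nat \<Rightarrow> bool) \<Rightarrow> bool" where
  "connected_graph N G = (\<forall>i\<in>{1..N}. \<forall>j\<in>{1..N}. G\<^sup>*\<^sup>* i j)"

definition complete_graph :: "nat \<Rightarrow> (nat \<Rightarrow> nat \<Rightarrow> bool) \<Rightarrow> bool" where
  "complete_graph N G = (\<forall>i\<in>{1..N}. \<forall>j\<in>{1..N}. i \<noteq> j \<longrightarrow> G i j)"

text \<open>Step sizes: nu_k(i) = number of updates of player i at iterations 0..k;
  alpha_{k,i} = 1/nu_k(i) (Isabelle convention 1/0 = 0 before the first update).\<close>
definition nu :: "(nat \<Rightarrow> nat \<times> nat) \<Rightarrow> nat \<Rightarrow> nat \<Rightarrow> nat" where
  "nu c k i = card {t \<in> {..k}. i = fst (c t) \<or> i = snd (c t)}"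

definition alpha :: "(nat \<Rightarrow> nat \<times> nat) \<Rightarrow> nat \<Rightarrow> nat \<Rightarrow> real" where
  "alpha c k i = 1 / real (nu c k i)"

definition alpha_max :: "nat \<Rightarrow> (nat \<Rightarrow> nat \<times> nat) \<Rightarrow> nat \<Rightarrow> real" where
  "alpha_max N c k = Max ((\<lambda>i. alpha c k i) ` {1..N})"

text \<open>The gossip iteration, as a function of the sequence of selected pairs c k = (i_k, j_k).
  Om i = Omega_i, G i x y = gradient of J_i in x_i at (x, y), where y holds the
  other coordinates x_{-i}^i (y j for j in N_I(i), 0 elsewhere).\<close>
primrec gossip_state ::
  "(nat \<Rightarrow> nat \<Rightarrow> bool) \<Rightarrow> nat \<Rightarrow> (nat \<Rightarrow> real set) \<Rightarrow> (nat \<Rightarrow> real \<Rightarrow> (nat \<Rightarrow> real) \<Rightarrow> real)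
   \<Rightarrow> (nat \<Rightarrow> real) \<Rightarrow> (nat \<Rightarrow> nat \<times> nat) \<Rightarrow> nat \<Rightarrow> nat \<Rightarrow> real" where
  "gossip_state EI N Om G x0 c 0 = x0"
| "gossip_state EI N Om G x0 c (Suc k) =
    (let x = gossip_state EI N Om G x0 c k;
         a = fst (c k); b = snd (c k);
         xb = mv (mtot EI N) (Wmat EI N a b) x;
         xhat = (\<lambda>i j. if j \<in> nbI EI N i then xb (spos EI N i j) else 0);
         xnew = (\<lambda>i. if i = a \<or> i = b
                     then closest_point (Om i)
                            (x (spos EI N i i) - alpha c k i * G i (x (spos EI N i i)) (xhat i))
                     else x (spos EI N i i))
     in (\<lambda>p. xb p + (\<Sum>i=1..N. Evec EI N i i p * (xnew i - xb (spos EI N i i)))))"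

definition Dom_other :: "(nat \<Rightarrow> nat \<Rightarrow> bool) \<Rightarrow> nat \<Rightarrow> (nat \<Rightarrow> real set) \<Rightarrow> nat \<Rightarrow> (nat \<Rightarrow> real) set" where
  "Dom_other EI N Om i = {y. (\<forall>j\<in>nbI EI N i. y j \<in> Om j) \<and> (\<forall>j. j \<notin> nbI EI N i \<longrightarrow> y j = 0)}"

end

theory Submission
  imports Defs
begin

text \<open>
  The disagreement V(x) = sum_j sum_{i in N_I(j)} (x_j^i - x_j^j)^2 of the estimates with
  the actions dominates |x - Z|^2, because Z replaces each estimate of x_j by the mean of all
  estimates of x_j. A gossip step averages the common estimates of i_k and j_k, which lowers V
  by half of every squared gap it closes. Every edge of G_I is an edge or a path of two edges
  of G_C (G_m is maximal triangle-free), so the expected decrease is at least c V with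
  c = 1/(8 N^3). A projected gradient step moves an action by at most alpha_{k,i} L, where L
  bounds the gradients on the compact feasible set. Hence
  E V(k+1) <= (1 - c^2) E V(k) + K E (sum of alpha_{k,i}^2 over the players updating at k),
  and along the updates of one player the step sizes are 1, 1/2, 1/3, ..., so the noise terms
  have a bounded sum. Thus sum_k E V(k) < oo, which gives (ii). Every player updates with
  probability at least 1/N^2 at each step, so also sum_k alpha_{k,i}^2 < oo almost surely,
  and (i) follows from 2ab <= a^2 + b^2.
\<close>

section \<open>Elementary inequalities\<close>

lemma sum_power2_dev_mean_le:
  fixes w :: "'a \<Rightarrow> real"
  assumes "finite A" "A \<noteq> {}"
  shows "(\<Sum>i\<in>A. (w i - (\<Sum>j\<in>A. w j) / card A)\<^sup>2) \<le> (\<Sum>i\<in>A. (w i - z)\<^sup>2)"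
proof -
  define mu where "mu = (\<Sum>j\<in>A. w j) / card A"
  have "real (card A) > 0" using assms by (simp add: card_gt_0_iff)
  then have dev_sum: "(\<Sum>i\<in>A. w i - mu) = 0"
    unfolding mu_def by (simp add: sum_subtractf)
  have "(\<Sum>i\<in>A. (w i - z)\<^sup>2) = (\<Sum>i\<in>A. (w i - mu)\<^sup>2 + 2 * (mu - z) * (w i - mu) + (mu - z)\<^sup>2)"
    by (intro sum.cong refl) (simp add: power2_eq_square algebra_simps)
  also have "\<dots> = (\<Sum>i\<in>A. (w i - mu)\<^sup>2) + 2 * (mu - z) * (\<Sum>i\<in>A. w i - mu) + card A * (mu - z)\<^sup>2"
    by (simp add: sum.distrib sum_distrib_left)
  finally show ?thesis using dev_sum unfolding mu_def[symmetric] by simp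
qed

lemma power2_diff_le_weighted:
  fixes u d e :: real
  assumes "e > 0"
  shows "(u - d)\<^sup>2 \<le> (1 + e) * u\<^sup>2 + (1 + 1/e) * d\<^sup>2"
proof -
  have "0 \<le> (e * u + d)\<^sup>2 / e" using assms by simp
  also have "(e * u + d)\<^sup>2 / e = e * u\<^sup>2 + 2 * u * d + d\<^sup>2 / e"
    using assms by (simp add: power2_eq_square field_simps)
  finally show ?thesis by (simp add: power2_eq_square algebra_simps)
qed

lemma power2_diff_le_via:
  fixes x y z :: real
  shows "(x - z)\<^sup>2 \<le> 2 * (x - y)\<^sup>2 + 2 * (y - z)\<^sup>2"
proof -
  have "2 * (x - y)\<^sup>2 + 2 * (y - z)\<^sup>2 - (x - z)\<^sup>2 = ((x - y) - (y - z))\<^sup>2"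
    by (simp add: power2_eq_square algebra_simps)
  then show ?thesis by (metis diff_ge_0_iff_ge zero_le_power2)
qed

lemma sum_inverse_squares_le_suminf:
  "(\<Sum>m<K. inverse (real m ^ 2)) \<le> (\<Sum>m. inverse (real m ^ 2))"
  by (rule sum_le_suminf) (use inverse_power_summable[of 2] in auto)

section \<open>Independent random choices\<close>

lemma (in prob_space) AE_summable_if_expectations_bounded:
  fixes f :: "nat \<Rightarrow> 'a \<Rightarrow> real"
  assumes int: "\<And>k. integrable M (f k)" and nonneg: "\<And>k \<omega>. f k \<omega> \<ge> 0"
    and bounded: "\<And>n. (\<Sum>k<n. expectation (f k)) \<le> B"
  shows "AE \<omega> in M. summable (\<lambda>k. f k \<omega>)"
proof -
  have E_nonneg: "expectation (f k) \<ge> 0" for k using nonneg by simp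
  have "summable (\<lambda>k. expectation (f k))"
  proof (rule bounded_imp_summable[OF E_nonneg])
    show "(\<Sum>k\<le>n. expectation (f k)) \<le> B" for n
      using bounded[of "Suc n"] by (simp add: lessThan_Suc_atMost)
  qed
  then have finite_sum: "(\<Sum>k. ennreal (expectation (f k))) \<noteq> \<top>"
    using E_nonneg by (intro ennreal_suminf_neq_top) auto
  have meas: "\<And>k. f k \<in> borel_measurable M" using int by auto
  have "(\<integral>\<^sup>+ \<omega>. (\<Sum>k. ennreal (f k \<omega>)) \<partial>M) = (\<Sum>k. \<integral>\<^sup>+ \<omega>. ennreal (f k \<omega>) \<partial>M)"
    using meas by (intro nn_integral_suminf) auto
  also have "\<dots> = (\<Sum>k. ennreal (expectation (f k)))"
    using int nonneg by (subst nn_integral_eq_integral) auto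
  finally have "AE \<omega> in M. (\<Sum>k. ennreal (f k \<omega>)) \<noteq> \<infinity>"
    using meas finite_sum by (intro nn_integral_noteq_infinite) auto
  then show ?thesis
    by eventually_elim (rule summable_suminf_not_top[OF nonneg], simp)
qed

definition depends_on_prefix :: "nat \<Rightarrow> ((nat \<Rightarrow> 'b) \<Rightarrow> 'c) \<Rightarrow> bool" where
  "depends_on_prefix k \<Psi> \<longleftrightarrow> (\<forall>c c'. (\<forall>t<k. c t = c' t) \<longrightarrow> \<Psi> c = \<Psi> c')"

lemma depends_on_prefixI:
  "(\<And>c c'. (\<And>t. t < k \<Longrightarrow> c t = c' t) \<Longrightarrow> \<Psi> c = \<Psi> c') \<Longrightarrow> depends_on_prefix k \<Psi>"
  unfolding depends_on_prefix_def by blast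

lemma depends_on_prefixD:
  "depends_on_prefix k \<Psi> \<Longrightarrow> (\<And>t. t < k \<Longrightarrow> c t = c' t) \<Longrightarrow> \<Psi> c = \<Psi> c'"
  unfolding depends_on_prefix_def by blast

locale iid_choices = prob_space M for M :: "'a measure" +
  fixes C :: "nat \<Rightarrow> 'a \<Rightarrow> 'b::countable" and S :: "'b set" and p :: "'b \<Rightarrow> real"
  assumes indep_C: "indep_vars (\<lambda>_. count_space UNIV) C UNIV"
    and finite_S: "finite S"
    and prob_C_eq: "\<And>k x. prob {\<omega> \<in> space M. C k \<omega> = x} = (if x \<in> S then p x else 0)"
    and sum_p: "(\<Sum>x\<in>S. p x) = 1"
begin

lemma measurable_C: "C k \<in> measurable M (count_space UNIV)"
  using indep_C unfolding indep_vars_def2 by auto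

lemma events_C_eq: "{\<omega> \<in> space M. C k \<omega> = x} \<in> events"
proof -
  have "C k -` {x} \<inter> space M \<in> events" using measurable_sets[OF measurable_C] by simp
  moreover have "{\<omega> \<in> space M. C k \<omega> = x} = C k -` {x} \<inter> space M" by auto
  ultimately show ?thesis by simp
qed

lemma AE_C_in_S: "AE \<omega> in M. \<forall>t. C t \<omega> \<in> S"
proof (subst AE_all_countable, intro allI)
  fix t
  have eq: "{\<omega> \<in> space M. C t \<omega> \<in> S} = (\<Union>x\<in>S. {\<omega> \<in> space M. C t \<omega> = x})" by auto
  have "prob (\<Union>x\<in>S. {\<omega> \<in> space M. C t \<omega> = x}) = (\<Sum>x\<in>S. prob {\<omega> \<in> space M. C t \<omega> = x})"
    by (rule measure_finite_Union) (auto simp: finite_S events_C_eq disjoint_family_on_def)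
  also have "\<dots> = 1" using sum_p by (simp add: prob_C_eq)
  finally have "AE \<omega> in M. \<omega> \<in> {\<omega> \<in> space M. C t \<omega> \<in> S}"
    using eq by (intro AE_prob_1) simp
  then show "AE \<omega> in M. C t \<omega> \<in> S" by eventually_elim auto
qed

definition choice_prefix :: "nat \<Rightarrow> 'a \<Rightarrow> 'b list" where
  "choice_prefix k \<omega> = map (\<lambda>t. C t \<omega>) [0..<k]"

definition choice_lists :: "nat \<Rightarrow> 'b list set" where
  "choice_lists k = {l. set l \<subseteq> S \<and> length l = k}"

definition list_prob :: "'b list \<Rightarrow> real" where
  "list_prob l = prod_list (map p l)"

lemma finite_choice_lists: "finite (choice_lists k)"
  unfolding choice_lists_def by (rule finite_lists_length_eq[OF finite_S])

lemma choice_lists_Suc: "choice_lists (Suc k) = (\<lambda>(l, x). l @ [x]) ` (choice_lists k \<times> S)"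
proof
  show "(\<lambda>(l, x). l @ [x]) ` (choice_lists k \<times> S) \<subseteq> choice_lists (Suc k)"
    unfolding choice_lists_def by auto
  show "choice_lists (Suc k) \<subseteq> (\<lambda>(l, x). l @ [x]) ` (choice_lists k \<times> S)"
  proof
    fix l assume l: "l \<in> choice_lists (Suc k)"
    then have "l \<noteq> []" unfolding choice_lists_def by auto
    then obtain l' x where lx: "l = l' @ [x]" by (metis rev_exhaust)
    then have "l' \<in> choice_lists k" "x \<in> S" using l unfolding choice_lists_def by auto
    then show "l \<in> (\<lambda>(l, x). l @ [x]) ` (choice_lists k \<times> S)" using lx by force
  qed
qed

lemma choice_prefix_eq_iff: "choice_prefix k \<omega> = l \<longleftrightarrow> length l = k \<and> (\<forall>t<k. C t \<omega> = l ! t)"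
  unfolding choice_prefix_def by (auto simp: list_eq_iff_nth_eq)

lemma choice_prefix_set_eq:
  assumes "length l = k" "k > 0"
  shows "{\<omega> \<in> space M. choice_prefix k \<omega> = l} = (\<Inter>t<k. {\<omega> \<in> space M. C t \<omega> = l ! t})"
  using assms by (auto simp: choice_prefix_eq_iff)

lemma events_choice_prefix_eq: "{\<omega> \<in> space M. choice_prefix k \<omega> = l} \<in> events"
proof -
  consider "length l \<noteq> k" | "length l = k" "k = 0" | "length l = k" "k > 0" by blast
  then show ?thesis
  proof cases
    case 1
    then have "{\<omega> \<in> space M. choice_prefix k \<omega> = l} = {}" by (auto simp: choice_prefix_eq_iff)
    then show ?thesis by (metis sets.empty_sets)
  next
    case 2
    then have "{\<omega> \<in> space M. choice_prefix k \<omega> = l} = space M" by (auto simp: choice_prefix_eq_iff)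
    then show ?thesis by simp
  next
    case 3
    then show ?thesis unfolding choice_prefix_set_eq[OF 3]
      by (intro sets.finite_INT events_C_eq) auto
  qed
qed

lemma measurable_choice_prefix: "choice_prefix k \<in> measurable M (count_space UNIV)"
  unfolding measurable_count_space_eq2_countable
proof (intro conjI ballI)
  fix l :: "'b list"
  have "choice_prefix k -` {l} \<inter> space M = {\<omega> \<in> space M. choice_prefix k \<omega> = l}" by auto
  then show "choice_prefix k -` {l} \<inter> space M \<in> sets M" using events_choice_prefix_eq by simp
qed simp

lemma prob_choice_prefix_eq:
  assumes "l \<in> choice_lists k"
  shows "prob {\<omega> \<in> space M. choice_prefix k \<omega> = l} = list_prob l"
proof (cases "k = 0")
  case True
  then have "l = []" using assms unfolding choice_lists_def by auto
  then have "{\<omega> \<in> space M. choice_prefix k \<omega> = l} = space M" using True by (auto simp: choice_prefix_eq_iff)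
  then show ?thesis using \<open>l = []\<close> by (simp add: list_prob_def prob_space)
next
  case False
  have len: "length l = k" and in_S: "set l \<subseteq> S" using assms unfolding choice_lists_def by auto
  have ind: "indep_sets (\<lambda>i. {C i -` A \<inter> space M | A. A \<in> sets (count_space UNIV)}) UNIV"
    using indep_C unfolding indep_vars_def2 by auto
  have "prob (\<Inter>t<k. {\<omega> \<in> space M. C t \<omega> = l ! t}) = (\<Prod>t<k. prob {\<omega> \<in> space M. C t \<omega> = l ! t})"
  proof (rule indep_setsD[OF ind])
    show "\<forall>t\<in>{..<k}. {\<omega> \<in> space M. C t \<omega> = l ! t} \<in> {C t -` A \<inter> space M | A. A \<in> sets (count_space UNIV)}"
    proof
      fix t
      have "{\<omega> \<in> space M. C t \<omega> = l ! t} = C t -` {l ! t} \<inter> space M" by auto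
      then show "{\<omega> \<in> space M. C t \<omega> = l ! t} \<in> {C t -` A \<inter> space M | A. A \<in> sets (count_space UNIV)}"
        by (intro CollectI exI[of _ "{l ! t}"]) simp
    qed
  qed (use False in \<open>simp_all add: lessThan_empty_iff\<close>)
  also have "\<dots> = (\<Prod>t<k. p (l ! t))"
  proof (rule prod.cong[OF refl])
    fix t assume "t \<in> {..<k}"
    then have "l ! t \<in> S" using in_S len by (auto intro: nth_mem)
    then show "prob {\<omega> \<in> space M. C t \<omega> = l ! t} = p (l ! t)" by (simp add: prob_C_eq)
  qed
  also have "\<dots> = list_prob l"
    unfolding list_prob_def prod.list_conv_set_nth using len by (simp add: atLeast0LessThan)
  finally show ?thesis using choice_prefix_set_eq[OF len] False by simp
qed

lemma expectation_fun_choice_prefix: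
  fixes F :: "'b list \<Rightarrow> real"
  shows "integrable M (\<lambda>\<omega>. F (choice_prefix k \<omega>))"
    and "expectation (\<lambda>\<omega>. F (choice_prefix k \<omega>)) = (\<Sum>l\<in>choice_lists k. F l * list_prob l)"
proof -
  let ?R = "\<lambda>\<omega>. \<Sum>l\<in>choice_lists k. F l * indicator {\<omega> \<in> space M. choice_prefix k \<omega> = l} \<omega>"
  have AE_eq: "AE \<omega> in M. ?R \<omega> = F (choice_prefix k \<omega>)"
    using AE_C_in_S AE_space
  proof eventually_elim
    case (elim \<omega>)
    have "choice_prefix k \<omega> \<in> choice_lists k" unfolding choice_lists_def choice_prefix_def using elim by auto
    moreover have "?R \<omega> = (\<Sum>l\<in>choice_lists k. if choice_prefix k \<omega> = l then F l else 0)"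
      using elim by (intro sum.cong refl) (auto simp: indicator_def)
    ultimately show ?case using finite_choice_lists by simp
  qed
  have int_R: "integrable M ?R"
    using events_choice_prefix_eq by (intro Bochner_Integration.integrable_sum
        Bochner_Integration.integrable_mult_right integrable_real_indicator) (auto simp: less_top[symmetric])
  have meas_F: "(\<lambda>\<omega>. F (choice_prefix k \<omega>)) \<in> borel_measurable M"
    by (rule measurable_compose[OF measurable_choice_prefix]) simp
  show "integrable M (\<lambda>\<omega>. F (choice_prefix k \<omega>))"
    by (rule integrable_cong_AE_imp[OF int_R meas_F AE_eq])
  have "expectation (\<lambda>\<omega>. F (choice_prefix k \<omega>)) = expectation ?R"
    using AE_eq by (intro integral_cong_AE[OF meas_F borel_measurable_integrable[OF int_R]]) auto
  also have "\<dots> = (\<Sum>l\<in>choice_lists k. expectation (\<lambda>\<omega>. F l * indicator {\<omega> \<in> space M. choice_prefix k \<omega> = l} \<omega>))"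
    using events_choice_prefix_eq by (intro Bochner_Integration.integral_sum
        Bochner_Integration.integrable_mult_right integrable_real_indicator) (auto simp: less_top[symmetric])
  also have "\<dots> = (\<Sum>l\<in>choice_lists k. F l * list_prob l)"
    using prob_choice_prefix_eq events_choice_prefix_eq by (intro sum.cong refl) (simp add: Int_absorb2)
  finally show "expectation (\<lambda>\<omega>. F (choice_prefix k \<omega>)) = (\<Sum>l\<in>choice_lists k. F l * list_prob l)" .
qed

lemma
  fixes \<Psi> :: "(nat \<Rightarrow> 'b) \<Rightarrow> real"
  assumes "depends_on_prefix k \<Psi>"
  shows integrable_prefix_functional: "integrable M (\<lambda>\<omega>. \<Psi> (\<lambda>t. C t \<omega>))"
    and expectation_prefix_functional:
      "expectation (\<lambda>\<omega>. \<Psi> (\<lambda>t. C t \<omega>)) = (\<Sum>l\<in>choice_lists k. \<Psi> ((!) l) * list_prob l)"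
proof -
  have "\<Psi> (\<lambda>t. C t \<omega>) = \<Psi> ((!) (choice_prefix k \<omega>))" for \<omega>
    by (rule depends_on_prefixD[OF assms]) (simp add: choice_prefix_def)
  then show "integrable M (\<lambda>\<omega>. \<Psi> (\<lambda>t. C t \<omega>))"
    and "expectation (\<lambda>\<omega>. \<Psi> (\<lambda>t. C t \<omega>)) = (\<Sum>l\<in>choice_lists k. \<Psi> ((!) l) * list_prob l)"
    using expectation_fun_choice_prefix[of "\<lambda>l. \<Psi> ((!) l)" k] by simp_all
qed

lemma expectation_next_choice:
  fixes \<Phi> :: "(nat \<Rightarrow> 'b) \<Rightarrow> 'b \<Rightarrow> real"
  assumes "\<And>x. depends_on_prefix k (\<lambda>c. \<Phi> c x)"
  shows "integrable M (\<lambda>\<omega>. \<Phi> (\<lambda>t. C t \<omega>) (C k \<omega>))"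
    and "integrable M (\<lambda>\<omega>. \<Sum>x\<in>S. p x * \<Phi> (\<lambda>t. C t \<omega>) x)"
    and "expectation (\<lambda>\<omega>. \<Phi> (\<lambda>t. C t \<omega>) (C k \<omega>)) = expectation (\<lambda>\<omega>. \<Sum>x\<in>S. p x * \<Phi> (\<lambda>t. C t \<omega>) x)"
proof -
  have dep_next: "depends_on_prefix (Suc k) (\<lambda>c. \<Phi> c (c k))"
  proof (rule depends_on_prefixI)
    fix c c' :: "nat \<Rightarrow> 'b" assume "\<And>t. t < Suc k \<Longrightarrow> c t = c' t"
    then show "\<Phi> c (c k) = \<Phi> c' (c' k)"
      using depends_on_prefixD[OF assms, of c c' "c k"] by simp
  qed
  have dep_avg: "depends_on_prefix k (\<lambda>c. \<Sum>x\<in>S. p x * \<Phi> c x)"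
  proof (rule depends_on_prefixI)
    fix c c' :: "nat \<Rightarrow> 'b" assume "\<And>t. t < k \<Longrightarrow> c t = c' t"
    then show "(\<Sum>x\<in>S. p x * \<Phi> c x) = (\<Sum>x\<in>S. p x * \<Phi> c' x)"
      using depends_on_prefixD[OF assms, of c c'] by simp
  qed
  show "integrable M (\<lambda>\<omega>. \<Phi> (\<lambda>t. C t \<omega>) (C k \<omega>))"
    using integrable_prefix_functional[OF dep_next] by simp
  show "integrable M (\<lambda>\<omega>. \<Sum>x\<in>S. p x * \<Phi> (\<lambda>t. C t \<omega>) x)"
    using integrable_prefix_functional[OF dep_avg] by simp
  have "(\<Sum>l\<in>choice_lists (Suc k). \<Phi> ((!) l) (l ! k) * list_prob l)
      = (\<Sum>(l, x)\<in>choice_lists k \<times> S. \<Phi> ((!) (l @ [x])) ((l @ [x]) ! k) * list_prob (l @ [x]))"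
    unfolding choice_lists_Suc by (subst sum.reindex) (auto simp: inj_on_def case_prod_unfold)
  also have "\<dots> = (\<Sum>(l, x)\<in>choice_lists k \<times> S. p x * \<Phi> ((!) l) x * list_prob l)"
  proof (rule sum.cong[OF refl], clarify)
    fix l x assume "l \<in> choice_lists k"
    then have len: "length l = k" unfolding choice_lists_def by auto
    have "\<Phi> ((!) (l @ [x])) x = \<Phi> ((!) l) x"
      by (rule depends_on_prefixD[OF assms]) (simp add: len nth_append)
    then show "\<Phi> ((!) (l @ [x])) ((l @ [x]) ! k) * list_prob (l @ [x]) = p x * \<Phi> ((!) l) x * list_prob l"
      using len by (simp add: list_prob_def nth_append)
  qed
  also have "\<dots> = (\<Sum>l\<in>choice_lists k. (\<Sum>x\<in>S. p x * \<Phi> ((!) l) x) * list_prob l)"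
    by (simp add: sum.cartesian_product[symmetric] sum_distrib_right)
  finally show "expectation (\<lambda>\<omega>. \<Phi> (\<lambda>t. C t \<omega>) (C k \<omega>)) = expectation (\<lambda>\<omega>. \<Sum>x\<in>S. p x * \<Phi> (\<lambda>t. C t \<omega>) x)"
    using expectation_prefix_functional[OF dep_next] expectation_prefix_functional[OF dep_avg] by simp
qed

end

section \<open>Communication graphs and step sizes\<close>

lemma max_triangle_free_two_hop:
  assumes "max_triangle_free_spanning N EI Gm" "graph_on N EI" "EI i j" "\<not> Gm i j"
  shows "\<exists>k. Gm i k \<and> Gm k j"
proof -
  have Gm_graph: "graph_on N Gm" and tf: "triangle_free N Gm"
    and not_tf: "\<not> triangle_free N (\<lambda>a b. Gm a b \<or> (a = i \<and> b = j) \<or> (a = j \<and> b = i))"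
    using assms unfolding max_triangle_free_spanning_def by auto
  have "i \<noteq> j" using assms(2,3) unfolding graph_on_def by blast
  moreover have "\<And>x y. Gm x y \<Longrightarrow> Gm y x" "\<And>x. \<not> Gm x x"
    using Gm_graph unfolding graph_on_def by blast+
  moreover obtain a b c where "a \<in> {1..N}" "b \<in> {1..N}" "c \<in> {1..N}"
    and "Gm a b \<or> (a = i \<and> b = j) \<or> (a = j \<and> b = i)"
       "Gm b c \<or> (b = i \<and> c = j) \<or> (b = j \<and> c = i)"
       "Gm a c \<or> (a = i \<and> c = j) \<or> (a = j \<and> c = i)"
    and "\<not> (Gm a b \<and> Gm b c \<and> Gm a c)"
    using not_tf tf unfolding triangle_free_def by blast
  ultimately show ?thesis by metis
qed

lemma connected_graph_has_edge:
  assumes "connected_graph N G" "N \<ge> 2" "i \<in> {1..N}"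
  shows "\<exists>j. G i j"
proof -
  have "\<exists>j\<in>{1..N}. j \<noteq> i"
    using assms(2) by (cases "i = 1") (auto intro: bexI[of _ 1] bexI[of _ 2])
  then obtain j where j: "j \<in> {1..N}" "j \<noteq> i" by blast
  then have "G\<^sup>*\<^sup>* i j" using assms unfolding connected_graph_def by blast
  then show ?thesis using j(2) by (metis converse_rtranclpE)
qed

definition updated :: "(nat \<Rightarrow> nat \<times> nat) \<Rightarrow> nat \<Rightarrow> nat \<Rightarrow> bool" where
  "updated c i t \<longleftrightarrow> i = fst (c t) \<or> i = snd (c t)"

definition updates_before :: "(nat \<Rightarrow> nat \<times> nat) \<Rightarrow> nat \<Rightarrow> nat \<Rightarrow> nat" where
  "updates_before c i n = card {t. t < n \<and> updated c i t}"

lemma updates_before_Suc: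
  "updates_before c i (Suc n) = updates_before c i n + (if updated c i n then 1 else 0)"
proof -
  have "{t. t < Suc n \<and> updated c i t} = {t. t < n \<and> updated c i t} \<union> (if updated c i n then {n} else {})"
    by (auto simp: less_Suc_eq)
  then show ?thesis unfolding updates_before_def by auto
qed

lemma alpha_eq_updates_before: "alpha c k i = 1 / updates_before c i (Suc k)"
proof -
  have "{t \<in> {..k}. i = fst (c t) \<or> i = snd (c t)} = {t. t < Suc k \<and> updated c i t}"
    unfolding updated_def by auto
  then show ?thesis unfolding alpha_def nu_def updates_before_def by simp
qed

lemma sum_over_update_times:
  "(\<Sum>k<n. if updated c i k then f (updates_before c i k) else 0) = (\<Sum>m<updates_before c i n. f m)"
  by (induction n) (simp_all add: updates_before_Suc updates_before_def[of c i 0])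

definition step_size_sq_sum :: "nat \<Rightarrow> (nat \<Rightarrow> nat \<times> nat) \<Rightarrow> nat \<Rightarrow> real" where
  "step_size_sq_sum N c k = (\<Sum>j=1..N. if updated c j k then (alpha c k j)\<^sup>2 else 0)"

text \<open>Along the updates of one player the step sizes run through 1, 1/2, 1/3, \<dots>\<close>

lemma sum_step_size_sq_sum_le:
  "(\<Sum>k<n. step_size_sq_sum N c k) \<le> N * (\<Sum>m. inverse (real m ^ 2))"
proof -
  have "(\<Sum>k<n. if updated c j k then (alpha c k j)\<^sup>2 else 0) \<le> (\<Sum>m. inverse (real m ^ 2))" for j
  proof -
    have "(\<Sum>k<n. if updated c j k then (alpha c k j)\<^sup>2 else 0)
        = (\<Sum>k<n. if updated c j k then inverse (real (Suc (updates_before c j k)) ^ 2) else 0)"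
      by (intro sum.cong refl) (simp add: alpha_eq_updates_before updates_before_Suc power_one_over inverse_eq_divide)
    also have "\<dots> = (\<Sum>m<updates_before c j n. inverse (real (Suc m) ^ 2))"
      by (rule sum_over_update_times)
    also have "\<dots> \<le> (\<Sum>m<Suc (updates_before c j n). inverse (real m ^ 2))"
      by (simp add: sum.lessThan_Suc_shift del: sum.lessThan_Suc of_nat_Suc)
    also have "\<dots> \<le> (\<Sum>m. inverse (real m ^ 2))"
      by (rule sum_inverse_squares_le_suminf)
    finally show ?thesis .
  qed
  then have "(\<Sum>j=1..N. \<Sum>k<n. if updated c j k then (alpha c k j)\<^sup>2 else 0) \<le> N * (\<Sum>m. inverse (real m ^ 2))"
    using sum_mono[of "{1..N}" _ "\<lambda>_. \<Sum>m. inverse (real m ^ 2)"] by simp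
  then show ?thesis
    unfolding step_size_sq_sum_def by (subst sum.swap) simp
qed

lemma sum_step_size_sq_before_update_le:
  "(\<Sum>k<n. if updated c i (Suc k) then (alpha c k i)\<^sup>2 else 0) \<le> (\<Sum>m. inverse (real m ^ 2))"
proof -
  let ?f = "\<lambda>k. if updated c i k then inverse (real (updates_before c i k) ^ 2) else 0"
  have "(\<Sum>k<n. if updated c i (Suc k) then (alpha c k i)\<^sup>2 else 0) = (\<Sum>k<n. ?f (Suc k))"
    by (intro sum.cong refl) (simp add: alpha_eq_updates_before power_one_over inverse_eq_divide)
  also have "\<dots> \<le> (\<Sum>k<Suc n. ?f k)"
    by (simp add: sum.lessThan_Suc_shift del: sum.lessThan_Suc)
  also have "\<dots> = (\<Sum>m<updates_before c i (Suc n). inverse (real m ^ 2))"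
    by (rule sum_over_update_times)
  also have "\<dots> \<le> (\<Sum>m. inverse (real m ^ 2))"
    by (rule sum_inverse_squares_le_suminf)
  finally show ?thesis .
qed

lemma alpha_max_sq_le:
  assumes "N \<ge> 1"
  shows "alpha_max N c k \<ge> 0" and "(alpha_max N c k)\<^sup>2 \<le> (\<Sum>i=1..N. (alpha c k i)\<^sup>2)"
proof -
  have "alpha_max N c k \<in> (\<lambda>i. alpha c k i) ` {1..N}"
    unfolding alpha_max_def using assms by (intro Max_in) auto
  then obtain i where i: "i \<in> {1..N}" "alpha_max N c k = alpha c k i" by blast
  then show "alpha_max N c k \<ge> 0" by (simp add: alpha_def)
  show "(alpha_max N c k)\<^sup>2 \<le> (\<Sum>i=1..N. (alpha c k i)\<^sup>2)"
    using i by (auto intro: member_le_sum)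
qed

lemma alpha_depends_on_prefix: "depends_on_prefix (Suc k) (\<lambda>c. alpha c k i)"
proof (rule depends_on_prefixI)
  fix c c' :: "nat \<Rightarrow> nat \<times> nat" assume "\<And>t. t < Suc k \<Longrightarrow> c t = c' t"
  then have "{t \<in> {..k}. i = fst (c t) \<or> i = snd (c t)} = {t \<in> {..k}. i = fst (c' t) \<or> i = snd (c' t)}"
    by auto
  then show "alpha c k i = alpha c' k i" unfolding alpha_def nu_def by simp
qed

lemma step_size_sq_sum_depends_on_prefix: "depends_on_prefix (Suc k) (\<lambda>c. step_size_sq_sum N c k)"
proof (rule depends_on_prefixI)
  fix c c' :: "nat \<Rightarrow> nat \<times> nat" assume prefix: "\<And>t. t < Suc k \<Longrightarrow> c t = c' t"
  then have "alpha c k = alpha c' k"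
    using depends_on_prefixD[OF alpha_depends_on_prefix] by blast
  moreover have "c k = c' k" using prefix by simp
  ultimately show "step_size_sq_sum N c k = step_size_sq_sum N c' k"
    unfolding step_size_sq_sum_def updated_def by (simp only:)
qed

section \<open>Estimate vectors\<close>

locale interference_graph =
  fixes N :: nat and EI :: "nat \<Rightarrow> nat \<Rightarrow> bool"
  assumes graph: "graph_on N EI"
begin

abbreviation "nbr \<equiv> nbI EI N"
abbreviation "cnbr \<equiv> nbIt EI N"
abbreviation "pos \<equiv> spos EI N"
abbreviation "est_dim \<equiv> mtot EI N"

text \<open>Player i's estimates occupy the positions block_offset i + 1, ..., block_offset i + m_i
  of the state vector, ordered by the player whose action they estimate.\<close>

definition block_offset :: "nat \<Rightarrow> nat" where
  "block_offset i = (\<Sum>r=1..<i. mi EI N r)"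

lemma edge_range: "EI i j \<Longrightarrow> i \<in> {1..N} \<and> j \<in> {1..N}"
  and edge_sym: "EI i j \<Longrightarrow> EI j i"
  and no_loop: "\<not> EI i i"
  using graph unfolding graph_on_def by blast+

lemma nbr_iff: "j \<in> nbr i \<longleftrightarrow> EI i j"
  unfolding nbI_def using edge_range by blast

lemma nbr_subset: "nbr i \<subseteq> {1..N}"
  unfolding nbI_def by auto

lemma finite_nbr [simp]: "finite (nbr i)"
  using nbr_subset finite_subset by blast

lemma finite_cnbr [simp]: "finite (cnbr i)"
  unfolding nbIt_def by simp

lemma not_in_nbr_self: "i \<notin> nbr i"
  unfolding nbr_iff by (rule no_loop)

lemma card_nbr_le: "card (nbr j) \<le> N"
  using card_mono[OF _ nbr_subset, of j] by simp

lemma cnbr_iff: "j \<in> cnbr i \<longleftrightarrow> j = i \<or> EI i j"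
  using nbr_iff[of j i] unfolding nbIt_def by simp

lemma cnbr_subset: "i \<in> {1..N} \<Longrightarrow> cnbr i \<subseteq> {1..N}"
  unfolding nbIt_def using nbr_subset by simp

lemma cnbr_sym: "j \<in> cnbr i \<longleftrightarrow> i \<in> cnbr j"
  unfolding cnbr_iff by (metis edge_sym)

lemma self_in_cnbr [simp]: "i \<in> cnbr i"
  unfolding nbIt_def by simp

lemma mi_eq_card_cnbr: "mi EI N i = card (cnbr i)"
  unfolding mi_def nbIt_def using not_in_nbr_self by simp

lemma pos_eq: "pos i l = card (cnbr i \<inter> {1..l}) + block_offset i"
proof -
  have "(\<Sum>l'=1..l. Bmat EI i l') = (\<Sum>l'\<in>{1..l}. if l' \<in> cnbr i then 1 else 0)"
    by (intro sum.cong refl) (auto simp: Bmat_def cnbr_iff no_loop)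
  also have "\<dots> = card (cnbr i \<inter> {1..l})"
    by (simp add: sum.If_cases Int_commute)
  finally show ?thesis unfolding spos_def block_offset_def by simp
qed

lemma pos_bounds:
  assumes "i \<in> {1..N}" "l \<in> cnbr i"
  shows "block_offset i < pos i l \<and> pos i l \<le> block_offset i + mi EI N i"
proof -
  have "l \<in> cnbr i \<inter> {1..l}" using assms cnbr_subset[OF assms(1)] by auto
  then have "card (cnbr i \<inter> {1..l}) \<ge> 1"
    by (metis One_nat_def Suc_leI card_gt_0_iff empty_iff finite_Int finite_cnbr)
  moreover have "card (cnbr i \<inter> {1..l}) \<le> card (cnbr i)"
    by (simp add: card_mono)
  ultimately show ?thesis unfolding pos_eq mi_eq_card_cnbr by simp
qed

lemma block_offset_mono:
  assumes "1 \<le> i" "i < i'"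
  shows "block_offset i + mi EI N i \<le> block_offset i'"
proof -
  have "block_offset i + mi EI N i = (\<Sum>r=1..<Suc i. mi EI N r)"
    unfolding block_offset_def using assms by simp
  also have "\<dots> \<le> (\<Sum>r=1..<i'. mi EI N r)"
    by (rule sum_mono2) (use assms in auto)
  finally show ?thesis unfolding block_offset_def .
qed

lemma block_offset_last: "block_offset (Suc N) = est_dim"
  unfolding block_offset_def mtot_def by (simp add: atLeastLessThanSuc_atLeastAtMost)

lemma card_cnbr_prefix_strict_mono:
  assumes "l \<in> cnbr i" "l' \<in> cnbr i" "l < l'"
  shows "card (cnbr i \<inter> {1..l}) < card (cnbr i \<inter> {1..l'})"
proof (rule psubset_card_mono)
  have "l' \<in> cnbr i \<inter> {1..l'}" "l' \<notin> cnbr i \<inter> {1..l}"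
    "cnbr i \<inter> {1..l} \<subseteq> cnbr i \<inter> {1..l'}"
    using assms by auto
  then show "cnbr i \<inter> {1..l} \<subset> cnbr i \<inter> {1..l'}"
    by blast
qed simp

lemma pos_inj:
  assumes "i \<in> {1..N}" "l \<in> cnbr i" "i' \<in> {1..N}" "l' \<in> cnbr i'" "pos i l = pos i' l'"
  shows "i = i' \<and> l = l'"
proof -
  have same_block: "i = i'"
    using pos_bounds[OF assms(1,2)] pos_bounds[OF assms(3,4)] assms
      block_offset_mono[of i i'] block_offset_mono[of i' i]
    by (cases i i' rule: linorder_cases) auto
  moreover have "l = l'"
    using card_cnbr_prefix_strict_mono[of l i l'] card_cnbr_prefix_strict_mono[of l' i l]
      assms(2,4,5) same_block
    by (cases l l' rule: linorder_cases) (auto simp: pos_eq)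
  ultimately show ?thesis by simp
qed

lemma pos_in_range:
  assumes "i \<in> {1..N}" "l \<in> cnbr i"
  shows "pos i l \<in> {1..est_dim}"
proof -
  have "block_offset i + mi EI N i \<le> block_offset (Suc N)"
    using assms by (intro block_offset_mono) auto
  then show ?thesis using pos_bounds[OF assms] block_offset_last by auto
qed

lemma pos_bij: "bij_betw (\<lambda>(i, l). pos i l) (Sigma {1..N} cnbr) {1..est_dim}"
proof -
  have inj: "inj_on (\<lambda>(i, l). pos i l) (Sigma {1..N} cnbr)"
    unfolding inj_on_def using pos_inj by auto
  have "card ((\<lambda>(i, l). pos i l) ` Sigma {1..N} cnbr) = est_dim"
    using card_image[OF inj] by (simp add: mi_eq_card_cnbr mtot_def)
  then have "(\<lambda>(i, l). pos i l) ` Sigma {1..N} cnbr = {1..est_dim}"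
    using pos_in_range by (intro card_subset_eq) auto
  then show ?thesis using inj unfolding bij_betw_def by simp
qed

lemma sum_positions: "(\<Sum>p=1..est_dim. f p) = (\<Sum>i=1..N. \<Sum>l\<in>cnbr i. f (pos i l))"
  using sum.reindex_bij_betw[OF pos_bij, of f]
  by (simp add: sum.Sigma split_def)

lemma Evec_at_pos:
  assumes "i' \<in> {1..N}" "i \<in> {1..N}" "l \<in> cnbr i"
  shows "Evec EI N i' j (pos i l) = (if i' = i \<and> j = l then 1 else 0)"
proof -
  have "j \<in> cnbr i' \<and> pos i l = pos i' j \<longleftrightarrow> i' = i \<and> j = l"
    using pos_inj[OF assms(2,3) assms(1), of j] assms by metis
  then show ?thesis unfolding Evec_def by (simp only:)
qed

lemma sum_Evec_mult:
  assumes "i \<in> {1..N}"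
  shows "(\<Sum>q=1..est_dim. Evec EI N i j q * s q) = (if j \<in> cnbr i then s (pos i j) else 0)"
proof (cases "j \<in> cnbr i")
  case True
  have "(\<Sum>q=1..est_dim. Evec EI N i j q * s q) = (\<Sum>q\<in>{1..est_dim}. if q = pos i j then s q else 0)"
    unfolding Evec_def using True by (intro sum.cong) auto
  then show ?thesis using True pos_in_range[OF assms True] by simp
qed (simp add: Evec_def)

lemma sum_Hmat_mult:
  assumes j: "j \<in> {1..N}"
  shows "(\<Sum>q=1..est_dim. Hmat EI N q j * s q) = (\<Sum>i\<in>cnbr j. s (pos i j))"
proof -
  have "(\<Sum>q=1..est_dim. Hmat EI N q j * s q) = (\<Sum>i=1..N. \<Sum>q=1..est_dim. Evec EI N i j q * s q)"
    unfolding Hmat_def sum_distrib_right by (rule sum.swap)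
  also have "\<dots> = (\<Sum>i=1..N. if j \<in> cnbr i then s (pos i j) else 0)"
    by (intro sum.cong refl sum_Evec_mult) auto
  also have "\<dots> = (\<Sum>i\<in>{i\<in>{1..N}. j \<in> cnbr i}. s (pos i j))"
    by (rule sum.inter_filter[symmetric]) simp
  also have "{i\<in>{1..N}. j \<in> cnbr i} = cnbr j"
    using cnbr_subset[OF j] cnbr_sym by auto
  finally show ?thesis .
qed

lemma Zvec_at_pos:
  assumes i: "i \<in> {1..N}" and l: "l \<in> cnbr i"
  shows "Zvec EI N s (pos i l) = (\<Sum>i'\<in>cnbr l. s (pos i' l)) / card (cnbr l)"
proof -
  have l_range: "l \<in> {1..N}" using cnbr_subset[OF i] l by blast
  have "Hmat EI N (pos i l) j = (if j = l then 1 else 0)" for j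
    unfolding Hmat_def using i l by (simp add: Evec_at_pos sum.If_cases)
  then have "Zvec EI N s (pos i l) = (\<Sum>j\<in>{1..N}. if j = l then mv est_dim (Hbar EI N) s j else 0)"
    unfolding Zvec_def mv_def[of N] by (intro sum.cong refl) auto
  also have "\<dots> = mv est_dim (Hbar EI N) s l"
    using l_range by simp
  also have "\<dots> = (\<Sum>q=1..est_dim. Hmat EI N q l * s q) / mi EI N l"
    unfolding mv_def Hbar_def by (simp add: sum_divide_distrib)
  finally show ?thesis using sum_Hmat_mult[OF l_range] mi_eq_card_cnbr by simp
qed

definition disagreement :: "(nat \<Rightarrow> real) \<Rightarrow> real" where
  "disagreement s = (\<Sum>j=1..N. \<Sum>i\<in>nbr j. (s (pos i j) - s (pos j j))\<^sup>2)"

lemma disagreement_nonneg: "disagreement s \<ge> 0"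
  unfolding disagreement_def by (simp add: sum_nonneg)

lemma vnorm_nonneg: "vnorm n v \<ge> 0"
  unfolding vnorm_def by (simp add: sum_nonneg)

text \<open>Z replaces every estimate of player l's action by the mean of all of them, the best
  constant approximation in the least-squares sense; l's own action is one such constant.\<close>

lemma vnorm_sub_Zvec_le_disagreement:
  "(vnorm est_dim (\<lambda>p. s p - Zvec EI N s p))\<^sup>2 \<le> disagreement s"
proof -
  let ?mean = "\<lambda>l. (\<Sum>i'\<in>cnbr l. s (pos i' l)) / card (cnbr l)"
  have "(vnorm est_dim (\<lambda>p. s p - Zvec EI N s p))\<^sup>2 = (\<Sum>i=1..N. \<Sum>l\<in>cnbr i. (s (pos i l) - ?mean l)\<^sup>2)"
    unfolding vnorm_def sum_positions by (simp add: sum_nonneg Zvec_at_pos)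
  also have "\<dots> = (\<Sum>i=1..N. \<Sum>l\<in>{l\<in>{1..N}. l \<in> cnbr i}. (s (pos i l) - ?mean l)\<^sup>2)"
    by (intro sum.cong refl) (use cnbr_subset in blast)
  also have "\<dots> = (\<Sum>l=1..N. \<Sum>i\<in>{i\<in>{1..N}. l \<in> cnbr i}. (s (pos i l) - ?mean l)\<^sup>2)"
    by (rule sum.swap_restrict) auto
  also have "\<dots> = (\<Sum>l=1..N. \<Sum>i\<in>cnbr l. (s (pos i l) - ?mean l)\<^sup>2)"
    by (intro sum.cong refl) (use cnbr_subset cnbr_sym in blast)
  also have "\<dots> \<le> (\<Sum>l=1..N. \<Sum>i\<in>cnbr l. (s (pos i l) - s (pos l l))\<^sup>2)"
    by (rule sum_mono, rule sum_power2_dev_mean_le) (auto simp: nbIt_def)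
  also have "\<dots> = disagreement s"
    unfolding disagreement_def nbIt_def using not_in_nbr_self by simp
  finally show ?thesis .
qed

lemma mv_Wmat:
  assumes "a \<in> {1..N}" "b \<in> {1..N}" "p \<in> {1..est_dim}"
  shows "mv est_dim (Wmat EI N a b) s p = s p - 1/2 * (\<Sum>l\<in>ind EI N a b.
            (Evec EI N a l p - Evec EI N b l p) * (s (pos a l) - s (pos b l)))"
proof -
  let ?X = "\<lambda>l q. Evec EI N a l q - Evec EI N b l q"
  have "mv est_dim (Wmat EI N a b) s p =
      (\<Sum>q=1..est_dim. (if p = q then 1 else 0) * s q - 1/2 * (\<Sum>l\<in>ind EI N a b. ?X l p * (?X l q * s q)))"
    unfolding mv_def Wmat_def
    by (intro sum.cong refl) (simp add: left_diff_distrib sum_distrib_right mult.assoc)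
  also have "\<dots> = (\<Sum>q=1..est_dim. (if p = q then 1 else 0) * s q)
      - 1/2 * (\<Sum>l\<in>ind EI N a b. ?X l p * (\<Sum>q=1..est_dim. ?X l q * s q))"
    by (simp add: sum_subtractf sum_distrib_left sum.swap[of _ "ind EI N a b"])
  also have "(\<Sum>q=1..est_dim. (if p = q then 1 else 0) * s q) = (\<Sum>q\<in>{1..est_dim}. if p = q then s q else 0)"
    by (rule sum.cong) auto
  also have "\<dots> = s p"
    using assms(3) by simp
  also have "(\<Sum>l\<in>ind EI N a b. ?X l p * (\<Sum>q=1..est_dim. ?X l q * s q))
      = (\<Sum>l\<in>ind EI N a b. ?X l p * (s (pos a l) - s (pos b l)))"
  proof (intro sum.cong refl)
    fix l assume "l \<in> ind EI N a b"
    then have "l \<in> cnbr a" "l \<in> cnbr b" unfolding ind_def by auto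
    then show "?X l p * (\<Sum>q=1..est_dim. ?X l q * s q) = ?X l p * (s (pos a l) - s (pos b l))"
      using sum_Evec_mult[OF assms(1), of l s] sum_Evec_mult[OF assms(2), of l s]
      by (simp add: left_diff_distrib sum_subtractf)
  qed
  finally show ?thesis .
qed

definition gossip_avg :: "(nat \<Rightarrow> real) \<Rightarrow> nat \<Rightarrow> nat \<Rightarrow> nat \<Rightarrow> nat \<Rightarrow> real" where
  "gossip_avg s a b i l =
    (if (i = a \<or> i = b) \<and> l \<in> ind EI N a b then (s (pos a l) + s (pos b l)) / 2 else s (pos i l))"

lemma mv_Wmat_at_pos:
  assumes "a \<in> {1..N}" "b \<in> {1..N}" "a \<noteq> b" "i \<in> {1..N}" "l \<in> cnbr i"
  shows "mv est_dim (Wmat EI N a b) s (pos i l) = gossip_avg s a b i l"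
proof -
  let ?D = "\<lambda>l'. s (pos a l') - s (pos b l')"
  have "(\<Sum>l'\<in>ind EI N a b. (Evec EI N a l' (pos i l) - Evec EI N b l' (pos i l)) * ?D l')
      = (\<Sum>l'\<in>ind EI N a b. if l' = l then ((if a = i then 1 else 0) - (if b = i then 1 else 0)) * ?D l else 0)"
    using assms by (intro sum.cong refl) (simp add: Evec_at_pos)
  also have "\<dots> = (if l \<in> ind EI N a b then ((if a = i then 1 else 0) - (if b = i then 1 else 0)) * ?D l else 0)"
    by (subst sum.delta) (auto simp: ind_def)
  finally show ?thesis
    unfolding mv_Wmat[OF assms(1,2) pos_in_range[OF assms(4,5)]] gossip_avg_def
    using assms(3) by (auto simp: field_simps)
qed

text \<open>The disagreement after averaging, still measured against the old actions.\<close>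

definition averaged_disagreement :: "(nat \<Rightarrow> real) \<Rightarrow> nat \<Rightarrow> nat \<Rightarrow> real" where
  "averaged_disagreement s a b = (\<Sum>j=1..N. \<Sum>i\<in>nbr j. (gossip_avg s a b i j - s (pos j j))\<^sup>2)"

definition pair_gap :: "(nat \<Rightarrow> real) \<Rightarrow> nat \<Rightarrow> nat \<Rightarrow> nat \<Rightarrow> real" where
  "pair_gap s a b j = (if j \<in> ind EI N a b then (s (pos a j) - s (pos b j))\<^sup>2 else 0)"

lemma pair_gap_nonneg: "pair_gap s a b j \<ge> 0"
  unfolding pair_gap_def by simp

lemma averaging_drop_at:
  assumes "a \<noteq> b" "j \<in> {1..N}"
  shows "(\<Sum>i\<in>nbr j. (s (pos i j) - s (pos j j))\<^sup>2) - (\<Sum>i\<in>nbr j. (gossip_avg s a b i j - s (pos j j))\<^sup>2)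
     \<ge> pair_gap s a b j / 2"
proof (cases "j \<in> ind EI N a b")
  case False
  then show ?thesis by (simp add: gossip_avg_def pair_gap_def)
next
  case common: True
  have in_cnbr: "a \<in> cnbr j" "b \<in> cnbr j" using common cnbr_sym unfolding ind_def by auto
  let ?f = "\<lambda>i. (s (pos i j) - s (pos j j))\<^sup>2 - (gossip_avg s a b i j - s (pos j j))\<^sup>2"
  let ?D = "(s (pos a j) - s (pos b j))\<^sup>2"
  have avg: "gossip_avg s a b a j = (s (pos a j) + s (pos b j)) / 2"
    "gossip_avg s a b b j = (s (pos a j) + s (pos b j)) / 2"
    using common unfolding gossip_avg_def by auto
  have "(\<Sum>i\<in>nbr j. ?f i) = (\<Sum>i\<in>nbr j \<inter> {a, b}. ?f i)"
    by (rule sum.mono_neutral_right) (auto simp: gossip_avg_def)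
  also have "\<dots> \<ge> ?D / 2"
  proof -
    consider "a \<noteq> j" "b \<noteq> j" | "a = j" | "b = j" by blast
    then show ?thesis
    proof cases
      case 1
      then have "nbr j \<inter> {a, b} = {a, b}" using in_cnbr unfolding nbIt_def by auto
      then show ?thesis
        using assms(1) by (simp add: avg power2_eq_square field_simps)
    next
      case 2
      then have "nbr j \<inter> {a, b} = {b}" using in_cnbr assms(1) not_in_nbr_self unfolding nbIt_def by auto
      then have "(\<Sum>i\<in>nbr j \<inter> {a, b}. ?f i) = ?f b" by simp
      moreover have "?f b = 3 * ?D / 4"
        unfolding avg using 2 by (simp add: power2_eq_square field_simps)
      moreover have "?D \<ge> 0" by simp
      ultimately show ?thesis by linarith
    next
      case 3
      then have "nbr j \<inter> {a, b} = {a}" using in_cnbr assms(1) not_in_nbr_self unfolding nbIt_def by auto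
      then have "(\<Sum>i\<in>nbr j \<inter> {a, b}. ?f i) = ?f a" by simp
      moreover have "?f a = 3 * ?D / 4"
        unfolding avg using 3 by (simp add: power2_eq_square field_simps)
      moreover have "?D \<ge> 0" by simp
      ultimately show ?thesis by linarith
    qed
  qed
  finally show ?thesis using common by (simp add: sum_subtractf pair_gap_def)
qed

lemma averaging_drop:
  assumes "a \<noteq> b"
  shows "disagreement s - averaged_disagreement s a b \<ge> (\<Sum>j=1..N. pair_gap s a b j) / 2"
proof -
  have "(\<Sum>j=1..N. pair_gap s a b j / 2) \<le> (\<Sum>j=1..N. (\<Sum>i\<in>nbr j. (s (pos i j) - s (pos j j))\<^sup>2)
      - (\<Sum>i\<in>nbr j. (gossip_avg s a b i j - s (pos j j))\<^sup>2))"
    by (intro sum_mono averaging_drop_at assms) simp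
  then show ?thesis
    unfolding disagreement_def averaged_disagreement_def by (simp add: sum_subtractf sum_divide_distrib)
qed

end

section \<open>The gossip iteration\<close>

definition comm_pairs :: "nat \<Rightarrow> (nat \<Rightarrow> nat \<Rightarrow> bool) \<Rightarrow> (nat \<times> nat) set" where
  "comm_pairs N EC = {(i, j). i \<in> {1..N} \<and> EC i j}"

definition pair_prob :: "nat \<Rightarrow> (nat \<Rightarrow> nat \<Rightarrow> bool) \<Rightarrow> nat \<times> nat \<Rightarrow> real" where
  "pair_prob N EC x = 1 / (real N * real (card {l. EC (fst x) l}))"

locale gossip_game = interference_graph +
  fixes Om :: "nat \<Rightarrow> real set" and G :: "nat \<Rightarrow> real \<Rightarrow> (nat \<Rightarrow> real) \<Rightarrow> real"
    and x0 :: "nat \<Rightarrow> real" and EC :: "nat \<Rightarrow> nat \<Rightarrow> bool"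
  assumes N_pos: "N \<ge> 1"
    and EC_EI: "\<And>i j. EC i j \<Longrightarrow> EI i j"
    and two_hop: "\<And>i j. EI i j \<Longrightarrow> EC i j \<or> (\<exists>k. EC i k \<and> EC k j)"
    and EC_neighbour: "\<And>i. i \<in> {1..N} \<Longrightarrow> \<exists>j. EC i j"
    and Om_nonempty: "\<And>i. i \<in> {1..N} \<Longrightarrow> Om i \<noteq> {}"
    and Om_compact: "\<And>i. i \<in> {1..N} \<Longrightarrow> compact (Om i)"
    and Om_convex: "\<And>i. i \<in> {1..N} \<Longrightarrow> convex (Om i)"
    and G_cont: "\<And>i. i \<in> {1..N} \<Longrightarrow> continuous_on (Om i \<times> Dom_other EI N Om i) (\<lambda>(x, y). G i x y)"
    and x0_in: "\<And>i j. i \<in> {1..N} \<Longrightarrow> j \<in> cnbr i \<Longrightarrow> x0 (pos i j) \<in> Om j"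
begin

abbreviation "state c k \<equiv> gossip_state EI N Om G x0 c k"
abbreviation "pairs \<equiv> comm_pairs N EC"

lemma comm_pair_props:
  assumes "(a, b) \<in> pairs"
  shows "a \<in> {1..N}" "b \<in> {1..N}" "a \<noteq> b" "EI a b"
  using assms EC_EI edge_range no_loop unfolding comm_pairs_def by blast+

definition others_estimates :: "(nat \<Rightarrow> real) \<Rightarrow> nat \<Rightarrow> nat \<Rightarrow> nat \<Rightarrow> nat \<Rightarrow> real" where
  "others_estimates s a b i = (\<lambda>j. if j \<in> nbr i then gossip_avg s a b i j else 0)"

definition new_action :: "(nat \<Rightarrow> nat \<times> nat) \<Rightarrow> nat \<Rightarrow> (nat \<Rightarrow> real) \<Rightarrow> nat \<Rightarrow> nat \<Rightarrow> nat \<Rightarrow> real" where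
  "new_action c k s a b i =
    (if i = a \<or> i = b
     then closest_point (Om i) (s (pos i i) - alpha c k i * G i (s (pos i i)) (others_estimates s a b i))
     else s (pos i i))"

lemma state_Suc_at_pos:
  assumes "c k = (a, b)" "(a, b) \<in> pairs" "i \<in> {1..N}" "l \<in> cnbr i"
  shows "state c (Suc k) (pos i l) =
    (if l = i then new_action c k (state c k) a b i else gossip_avg (state c k) a b i l)"
proof -
  define x where "x = state c k"
  define avg where "avg = mv est_dim (Wmat EI N a b) x"
  define act where "act = (\<lambda>i. if i = a \<or> i = b
     then closest_point (Om i) (x (pos i i) - alpha c k i * G i (x (pos i i))
       (\<lambda>j. if j \<in> nbr i then avg (pos i j) else 0))
     else x (pos i i))"
  have state_Suc: "state c (Suc k) = (\<lambda>p. avg p + (\<Sum>i=1..N. Evec EI N i i p * (act i - avg (pos i i))))"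
    unfolding act_def avg_def x_def by (simp add: Let_def assms(1))
  have avg_at: "\<And>i l. i \<in> {1..N} \<Longrightarrow> l \<in> cnbr i \<Longrightarrow> avg (pos i l) = gossip_avg x a b i l"
    unfolding avg_def using mv_Wmat_at_pos comm_pair_props[OF assms(2)] by blast
  have "(\<lambda>j. if j \<in> nbr i then avg (pos i j) else 0) = others_estimates x a b i"
    unfolding others_estimates_def using avg_at[OF assms(3)] by (auto simp: nbIt_def)
  then have "act i = new_action c k x a b i"
    by (simp add: act_def new_action_def)
  moreover have "(\<Sum>i'=1..N. Evec EI N i' i' (pos i l) * (act i' - avg (pos i' i')))
      = (if l = i then act i - avg (pos i i) else 0)"
  proof -
    have "(\<Sum>i'=1..N. Evec EI N i' i' (pos i l) * (act i' - avg (pos i' i')))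
        = (\<Sum>i'\<in>{1..N}. if i' = i then (if l = i then act i - avg (pos i i) else 0) else 0)"
      using assms(3,4) by (intro sum.cong refl) (auto simp: Evec_at_pos)
    then show ?thesis using assms(3) by simp
  qed
  ultimately show ?thesis
    unfolding state_Suc using avg_at[OF assms(3,4)] avg_at[OF assms(3) self_in_cnbr]
    by (simp add: x_def)
qed

lemma closed_Om: "i \<in> {1..N} \<Longrightarrow> closed (Om i)"
  using Om_compact compact_imp_closed by blast

lemma gossip_avg_in_Om:
  assumes "(a, b) \<in> pairs" "i \<in> {1..N}" "l \<in> cnbr i"
    and s_in: "\<And>i l. i \<in> {1..N} \<Longrightarrow> l \<in> cnbr i \<Longrightarrow> s (pos i l) \<in> Om l"
  shows "gossip_avg s a b i l \<in> Om l"
proof (cases "(i = a \<or> i = b) \<and> l \<in> ind EI N a b")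
  case True
  then have "s (pos a l) \<in> Om l" "s (pos b l) \<in> Om l"
    using s_in comm_pair_props[OF assms(1)] unfolding ind_def by auto
  moreover have "l \<in> {1..N}" using cnbr_subset[OF assms(2)] assms(3) by blast
  ultimately have "(1/2) *\<^sub>R s (pos a l) + (1/2) *\<^sub>R s (pos b l) \<in> Om l"
    by (intro convexD Om_convex) auto
  then show ?thesis using True unfolding gossip_avg_def by (simp add: add_divide_distrib)
next
  case False
  then have "gossip_avg s a b i l = s (pos i l)" unfolding gossip_avg_def by auto
  then show ?thesis using s_in assms by simp
qed

lemma others_estimates_in_Dom_other:
  assumes "(a, b) \<in> pairs" "i \<in> {1..N}"
    and "\<And>i l. i \<in> {1..N} \<Longrightarrow> l \<in> cnbr i \<Longrightarrow> s (pos i l) \<in> Om l"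
  shows "others_estimates s a b i \<in> Dom_other EI N Om i"
  unfolding Dom_other_def others_estimates_def
  using gossip_avg_in_Om[OF assms(1,2) _ assms(3)] by (auto simp: nbIt_def)

lemma state_in_Om:
  assumes "\<forall>t<k. c t \<in> pairs" "i \<in> {1..N}" "l \<in> cnbr i"
  shows "state c k (pos i l) \<in> Om l"
  using assms
proof (induction k arbitrary: i l)
  case 0
  then show ?case using x0_in by simp
next
  case (Suc k)
  obtain a b where ck: "c k = (a, b)" by fastforce
  have ab: "(a, b) \<in> pairs" using Suc.prems(1) ck by (metis lessI)
  have s_in: "\<And>i l. i \<in> {1..N} \<Longrightarrow> l \<in> cnbr i \<Longrightarrow> state c k (pos i l) \<in> Om l"
    using Suc.IH Suc.prems(1) by simp
  show ?case
    unfolding state_Suc_at_pos[of c k a b, OF ck ab Suc.prems(2,3)] new_action_def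
    using s_in[OF Suc.prems(2) self_in_cnbr] gossip_avg_in_Om[OF ab Suc.prems(2,3) s_in]
      closest_point_in_set[OF closed_Om[OF Suc.prems(2)] Om_nonempty[OF Suc.prems(2)]]
    by auto
qed

lemma disagreement_Suc_le_weighted:
  assumes "c k = (a, b)" "(a, b) \<in> pairs" "e > 0"
  shows "disagreement (state c (Suc k)) \<le> (1 + e) * averaged_disagreement (state c k) a b
      + (1 + 1/e) * N * (\<Sum>j=1..N. (new_action c k (state c k) a b j - state c k (pos j j))\<^sup>2)"
proof -
  let ?s = "state c k"
  let ?d = "\<lambda>j. new_action c k ?s a b j - ?s (pos j j)"
  have "disagreement (state c (Suc k)) = (\<Sum>j=1..N. \<Sum>i\<in>nbr j. ((gossip_avg ?s a b i j - ?s (pos j j)) - ?d j)\<^sup>2)"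
    unfolding disagreement_def
  proof (intro sum.cong refl)
    fix j i assume j: "j \<in> {1..N}" and i: "i \<in> nbr j"
    have "i \<in> {1..N}" "j \<in> cnbr i" "i \<noteq> j"
      using i nbr_iff edge_sym edge_range not_in_nbr_self unfolding nbIt_def by auto
    then show "(state c (Suc k) (pos i j) - state c (Suc k) (pos j j))\<^sup>2
        = ((gossip_avg ?s a b i j - ?s (pos j j)) - ?d j)\<^sup>2"
      using state_Suc_at_pos[of c k a b, OF assms(1,2)] j by simp
  qed
  also have "\<dots> \<le> (\<Sum>j=1..N. \<Sum>i\<in>nbr j. (1 + e) * (gossip_avg ?s a b i j - ?s (pos j j))\<^sup>2 + (1 + 1/e) * (?d j)\<^sup>2)"
    by (intro sum_mono power2_diff_le_weighted assms(3))
  also have "\<dots> = (1 + e) * averaged_disagreement ?s a b + (\<Sum>j=1..N. card (nbr j) * ((1 + 1/e) * (?d j)\<^sup>2))"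
    unfolding averaged_disagreement_def by (simp add: sum.distrib sum_distrib_left)
  also have "(\<Sum>j=1..N. card (nbr j) * ((1 + 1/e) * (?d j)\<^sup>2)) \<le> (\<Sum>j=1..N. N * ((1 + 1/e) * (?d j)\<^sup>2))"
    using assms(3) card_nbr_le by (intro sum_mono mult_right_mono) auto
  finally show ?thesis by (simp add: sum_distrib_left mult_ac)
qed

lemma compact_Dom_other:
  assumes "i \<in> {1..N}"
  shows "compact (Dom_other EI N Om i)"
proof -
  define T where "T j = (if j \<in> nbr i then Om j else {0})" for j
  have "Dom_other EI N Om i = PiE UNIV T"
    unfolding Dom_other_def T_def PiE_def Pi_def extensional_def by auto
  moreover have "compactin euclidean (T j)" for j
    using Om_compact nbr_subset unfolding T_def by (cases "j \<in> nbr i") (auto simp: subset_iff)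
  then have "compactin (product_topology (\<lambda>_. euclidean) UNIV) (PiE UNIV T)"
    by (subst compactin_PiE) auto
  ultimately show ?thesis by (simp add: euclidean_product_topology)
qed

lemma gradient_bounded: "\<exists>L. \<forall>i\<in>{1..N}. \<forall>x\<in>Om i. \<forall>y\<in>Dom_other EI N Om i. \<bar>G i x y\<bar> \<le> L"
proof -
  have "\<exists>L. \<forall>z\<in>Om i \<times> Dom_other EI N Om i. \<bar>(\<lambda>(x, y). G i x y) z\<bar> \<le> L" if i: "i \<in> {1..N}" for i
  proof -
    have "compact ((\<lambda>(x, y). G i x y) ` (Om i \<times> Dom_other EI N Om i))"
      by (intro compact_continuous_image G_cont[OF i] compact_Times Om_compact[OF i] compact_Dom_other[OF i])
    then have "bounded ((\<lambda>(x, y). G i x y) ` (Om i \<times> Dom_other EI N Om i))"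
      by (rule compact_imp_bounded)
    then show ?thesis unfolding bounded_real by auto
  qed
  then obtain L where L: "\<forall>i\<in>{1..N}. \<forall>z\<in>Om i \<times> Dom_other EI N Om i. \<bar>(\<lambda>(x, y). G i x y) z\<bar> \<le> L i"
    by metis
  have "\<bar>G i x y\<bar> \<le> (\<Sum>i'=1..N. \<bar>L i'\<bar>)" if "i \<in> {1..N}" "x \<in> Om i" "y \<in> Dom_other EI N Om i" for i x y
  proof -
    have "\<bar>G i x y\<bar> \<le> \<bar>L i\<bar>" using L that by fastforce
    also have "\<dots> \<le> (\<Sum>i'=1..N. \<bar>L i'\<bar>)"
      using that(1) by (intro member_le_sum) auto
    finally show ?thesis .
  qed
  then show ?thesis by blast
qed

definition grad_bound :: real where
  "grad_bound = (SOME L. \<forall>i\<in>{1..N}. \<forall>x\<in>Om i. \<forall>y\<in>Dom_other EI N Om i. \<bar>G i x y\<bar> \<le> L)"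

lemma abs_G_le_grad_bound:
  "i \<in> {1..N} \<Longrightarrow> x \<in> Om i \<Longrightarrow> y \<in> Dom_other EI N Om i \<Longrightarrow> \<bar>G i x y\<bar> \<le> grad_bound"
  using someI_ex[OF gradient_bounded] unfolding grad_bound_def by blast

text \<open>Projection onto a convex set is non-expansive and fixes the current action, so a
  projected gradient step moves the action by at most the step size times the gradient bound.\<close>

lemma new_action_move:
  assumes "c k = (a, b)" "(a, b) \<in> pairs" "\<forall>t<k. c t \<in> pairs" "j \<in> {1..N}"
  shows "(new_action c k (state c k) a b j - state c k (pos j j))\<^sup>2
    \<le> (if updated c j k then (alpha c k j * grad_bound)\<^sup>2 else 0)"
proof (cases "j = a \<or> j = b")
  case True
  let ?s = "state c k"
  let ?g = "G j (?s (pos j j)) (others_estimates ?s a b j)"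
  have s_in: "\<And>i l. i \<in> {1..N} \<Longrightarrow> l \<in> cnbr i \<Longrightarrow> ?s (pos i l) \<in> Om l"
    using state_in_Om assms(3) by blast
  have x_in: "?s (pos j j) \<in> Om j" using s_in[OF assms(4) self_in_cnbr] .
  have "\<bar>?g\<bar> \<le> grad_bound"
    using abs_G_le_grad_bound[OF assms(4) x_in others_estimates_in_Dom_other[OF assms(2,4) s_in]] .
  have "dist (closest_point (Om j) (?s (pos j j) - alpha c k j * ?g)) (closest_point (Om j) (?s (pos j j)))
      \<le> dist (?s (pos j j) - alpha c k j * ?g) (?s (pos j j))"
    by (rule closest_point_lipschitz[OF Om_convex[OF assms(4)] closed_Om[OF assms(4)] Om_nonempty[OF assms(4)]])
  then have "\<bar>new_action c k ?s a b j - ?s (pos j j)\<bar> \<le> alpha c k j * \<bar>?g\<bar>"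
    unfolding new_action_def using True closest_point_self[OF x_in]
    by (simp add: dist_real_def abs_mult alpha_def)
  also have "\<dots> \<le> alpha c k j * grad_bound"
    using \<open>\<bar>?g\<bar> \<le> grad_bound\<close> by (intro mult_left_mono) (auto simp: alpha_def)
  finally have "(new_action c k ?s a b j - ?s (pos j j))\<^sup>2 \<le> (alpha c k j * grad_bound)\<^sup>2"
    by (metis abs_ge_zero abs_le_square_iff abs_of_nonneg order.trans)
  then show ?thesis using True assms(1) unfolding updated_def by simp
next
  case False
  then show ?thesis unfolding new_action_def by simp
qed

lemma finite_pairs: "finite pairs"
proof -
  have "pairs \<subseteq> {1..N} \<times> {1..N}"
    unfolding comm_pairs_def using EC_EI edge_range by blast
  then show ?thesis by (rule finite_subset) auto
qed

lemma finite_EC_neighbours: "finite {l. EC a l}"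
proof (rule finite_subset)
  show "{l. EC a l} \<subseteq> {1..N}" using EC_EI edge_range by blast
qed simp

lemma card_EC_neighbours:
  assumes "a \<in> {1..N}"
  shows "1 \<le> card {l. EC a l}" "card {l. EC a l} \<le> N"
proof -
  have sub: "{l. EC a l} \<subseteq> {1..N}" using EC_EI edge_range by blast
  then have "finite {l. EC a l}" by (rule finite_subset) simp
  moreover have "{l. EC a l} \<noteq> {}" using EC_neighbour[OF assms] by blast
  ultimately show "1 \<le> card {l. EC a l}" by (simp add: Suc_le_eq card_gt_0_iff)
  show "card {l. EC a l} \<le> N" using card_mono[OF _ sub] by simp
qed

lemma pair_prob_ge:
  assumes "(a, b) \<in> pairs"
  shows "pair_prob N EC (a, b) \<ge> 1 / (real N)\<^sup>2"
proof -
  have "1 \<le> real (card {l. EC a l})" "real (card {l. EC a l}) \<le> real N"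
    using card_EC_neighbours[OF comm_pair_props(1)[OF assms]] by auto
  then have "0 < real N * real (card {l. EC a l})" "real N * real (card {l. EC a l}) \<le> (real N)\<^sup>2"
    using N_pos by (auto simp: power2_eq_square)
  then show ?thesis
    unfolding pair_prob_def by (simp add: frac_le)
qed

lemma sum_pair_prob: "(\<Sum>x\<in>pairs. pair_prob N EC x) = 1"
proof -
  have "pairs = Sigma {1..N} (\<lambda>i. {l. EC i l})"
    unfolding comm_pairs_def by auto
  then have "(\<Sum>x\<in>pairs. pair_prob N EC x) = (\<Sum>i=1..N. \<Sum>l\<in>{l. EC i l}. pair_prob N EC (i, l))"
    by (subst sum.Sigma) (auto simp: finite_EC_neighbours)
  also have "\<dots> = (\<Sum>i=1..N. 1 / real N)"
  proof (rule sum.cong[OF refl])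
    fix i assume "i \<in> {1..N}"
    then have "card {l. EC i l} \<noteq> 0" using card_EC_neighbours(1) by fastforce
    then show "(\<Sum>l\<in>{l. EC i l}. pair_prob N EC (i, l)) = 1 / real N"
      unfolding pair_prob_def by simp
  qed
  finally show ?thesis using N_pos by simp
qed

text \<open>Every edge of the interference graph is a communication edge or a path of two of
  them, so each squared disagreement is controlled by the gaps of at most two pairs.\<close>

lemma neighbour_gap_le_pair_gaps:
  assumes "j \<in> {1..N}" "i \<in> nbr j"
  shows "(s (pos i j) - s (pos j j))\<^sup>2 \<le> 4 * (\<Sum>(a, b)\<in>pairs. pair_gap s a b j)"
proof -
  let ?E = "\<Sum>(a, b)\<in>pairs. pair_gap s a b j"
  have gap_le: "(s (pos a j) - s (pos b j))\<^sup>2 \<le> ?E"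
    if "EC a b" "EI a j \<or> a = j" "EI b j \<or> b = j" for a b
  proof -
    have ab: "(a, b) \<in> pairs"
      using that(1) EC_EI edge_range unfolding comm_pairs_def by blast
    have "j \<in> ind EI N a b"
      using that(2,3) by (auto simp: ind_def cnbr_iff)
    then have "pair_gap s a b j = (s (pos a j) - s (pos b j))\<^sup>2"
      unfolding pair_gap_def by simp
    moreover have "(\<lambda>(a, b). pair_gap s a b j) (a, b) \<le> ?E"
      by (rule member_le_sum[OF ab]) (auto simp: pair_gap_nonneg finite_pairs split: prod.split)
    ultimately show ?thesis by simp
  qed
  have "?E \<ge> 0" by (intro sum_nonneg) (auto simp: pair_gap_nonneg)
  have ij: "EI i j" using assms(2) nbr_iff edge_sym by blast
  from two_hop[OF ij] show ?thesis
  proof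
    assume "EC i j"
    then have "(s (pos i j) - s (pos j j))\<^sup>2 \<le> ?E"
      using gap_le[of i j] ij by blast
    then show ?thesis using \<open>?E \<ge> 0\<close> by linarith
  next
    assume "\<exists>k. EC i k \<and> EC k j"
    then obtain k where k: "EC i k" "EC k j" by blast
    then have "EI k j" using EC_EI by blast
    then have "(s (pos i j) - s (pos k j))\<^sup>2 \<le> ?E" "(s (pos k j) - s (pos j j))\<^sup>2 \<le> ?E"
      using gap_le[of i k] gap_le[of k j] k ij by blast+
    then show ?thesis
      using power2_diff_le_via[where x = "s (pos i j)" and y = "s (pos k j)" and z = "s (pos j j)"]
      by linarith
  qed
qed

lemma disagreement_le_pair_gaps:
  "disagreement s \<le> 4 * N * (\<Sum>(a, b)\<in>pairs. \<Sum>j=1..N. pair_gap s a b j)"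
proof -
  have "disagreement s \<le> (\<Sum>j=1..N. \<Sum>i\<in>nbr j. 4 * (\<Sum>(a, b)\<in>pairs. pair_gap s a b j))"
    unfolding disagreement_def by (intro sum_mono neighbour_gap_le_pair_gaps) auto
  also have "\<dots> \<le> (\<Sum>j=1..N. N * (4 * (\<Sum>(a, b)\<in>pairs. pair_gap s a b j)))"
    using card_nbr_le
    by (intro sum_mono) (auto intro!: mult_right_mono sum_nonneg simp: pair_gap_nonneg)
  also have "\<dots> = 4 * N * (\<Sum>j=1..N. \<Sum>(a, b)\<in>pairs. pair_gap s a b j)"
    by (simp add: sum_distrib_left mult_ac)
  also have "(\<Sum>j=1..N. \<Sum>(a, b)\<in>pairs. pair_gap s a b j) = (\<Sum>(a, b)\<in>pairs. \<Sum>j=1..N. pair_gap s a b j)"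
    unfolding case_prod_unfold by (rule sum.swap)
  finally show ?thesis .
qed

lemma state_depends_on_prefix: "depends_on_prefix k (\<lambda>c. state c k)"
proof (rule depends_on_prefixI)
  fix c c' :: "nat \<Rightarrow> nat \<times> nat"
  show "(\<And>t. t < k \<Longrightarrow> c t = c' t) \<Longrightarrow> state c k = state c' k"
  proof (induction k)
    case (Suc k)
    then have "alpha c k = alpha c' k"
      using depends_on_prefixD[OF alpha_depends_on_prefix] by blast
    with Suc show ?case by (simp only: gossip_state.simps Let_def)
  qed simp
qed

definition drop_rate :: real where
  "drop_rate = 1 / (8 * real N ^ 3)"

lemma drop_rate_pos: "drop_rate > 0"
  unfolding drop_rate_def using N_pos by simp

lemma expected_averaging_drop:
  "(\<Sum>(a, b)\<in>pairs. pair_prob N EC (a, b) * (disagreement s - averaged_disagreement s a b))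
    \<ge> drop_rate * disagreement s"
proof -
  let ?T = "\<lambda>a b. \<Sum>j=1..N. pair_gap s a b j"
  have "(\<Sum>(a, b)\<in>pairs. 1 / (real N)\<^sup>2 * (?T a b / 2))
      \<le> (\<Sum>(a, b)\<in>pairs. pair_prob N EC (a, b) * (disagreement s - averaged_disagreement s a b))"
  proof (rule sum_mono, clarify)
    fix a b assume ab: "(a, b) \<in> pairs"
    have "1 / (real N)\<^sup>2 * (?T a b / 2) \<le> pair_prob N EC (a, b) * (?T a b / 2)"
      using pair_prob_ge[OF ab] by (intro mult_right_mono) (auto intro: sum_nonneg pair_gap_nonneg)
    also have "\<dots> \<le> pair_prob N EC (a, b) * (disagreement s - averaged_disagreement s a b)"
      using averaging_drop[OF comm_pair_props(3)[OF ab]] by (intro mult_left_mono) (auto simp: pair_prob_def)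
    finally show "1 / (real N)\<^sup>2 * (?T a b / 2)
        \<le> pair_prob N EC (a, b) * (disagreement s - averaged_disagreement s a b)" .
  qed
  moreover have "(\<Sum>(a, b)\<in>pairs. 1 / (real N)\<^sup>2 * (?T a b / 2)) = (\<Sum>(a, b)\<in>pairs. ?T a b) / (2 * (real N)\<^sup>2)"
    by (simp add: case_prod_unfold sum_divide_distrib[symmetric] sum_distrib_left)
  moreover have "drop_rate * disagreement s \<le> (\<Sum>(a, b)\<in>pairs. ?T a b) / (2 * (real N)\<^sup>2)"
    using disagreement_le_pair_gaps[of s] N_pos
    by (simp add: drop_rate_def field_simps power2_eq_square power3_eq_cube)
  ultimately show ?thesis by linarith
qed

definition noise_gain :: real where
  "noise_gain = (1 + 1 / drop_rate) * N * grad_bound\<^sup>2"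

lemma noise_gain_nonneg: "noise_gain \<ge> 0"
  unfolding noise_gain_def using drop_rate_pos by simp

lemma disagreement_Suc_le:
  assumes "c k = (a, b)" "(a, b) \<in> pairs" "\<forall>t<k. c t \<in> pairs"
  shows "disagreement (state c (Suc k))
    \<le> (1 + drop_rate) * averaged_disagreement (state c k) a b + noise_gain * step_size_sq_sum N c k"
proof -
  have "(\<Sum>j=1..N. (new_action c k (state c k) a b j - state c k (pos j j))\<^sup>2)
      \<le> (\<Sum>j=1..N. if updated c j k then (alpha c k j * grad_bound)\<^sup>2 else 0)"
    by (intro sum_mono new_action_move[of c k a b, OF assms(1,2,3)]) simp
  also have "\<dots> = grad_bound\<^sup>2 * step_size_sq_sum N c k"
    unfolding step_size_sq_sum_def
    by (simp add: sum_distrib_left power_mult_distrib if_distrib mult_ac cong: if_cong)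
  finally have "(1 + 1 / drop_rate) * N * (\<Sum>j=1..N. (new_action c k (state c k) a b j - state c k (pos j j))\<^sup>2)
      \<le> noise_gain * step_size_sq_sum N c k"
    unfolding noise_gain_def using drop_rate_pos by (simp add: mult_left_mono mult.assoc)
  then show ?thesis
    using disagreement_Suc_le_weighted[of c k a b, OF assms(1,2) drop_rate_pos] by linarith
qed

end

section \<open>Expected contraction of the disagreement\<close>

locale random_gossip = gossip_game N EI Om G x0 EC + prob_space M
  for N EI Om G x0 EC and M :: "'a measure" +
  fixes C :: "nat \<Rightarrow> 'a \<Rightarrow> nat \<times> nat"
  assumes C_indep: "indep_vars (\<lambda>_. count_space UNIV) C UNIV"
    and C_distr: "\<And>k x. prob {\<omega> \<in> space M. C k \<omega> = x} =
        (if x \<in> comm_pairs N EC then pair_prob N EC x else 0)"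

sublocale random_gossip \<subseteq> iid_choices M C "comm_pairs N EC" "pair_prob N EC"
  using C_indep C_distr finite_pairs sum_pair_prob by unfold_locales

context random_gossip
begin

abbreviation "choices \<omega> \<equiv> (\<lambda>t. C t \<omega>)"

lemma integrable_disagreement: "integrable M (\<lambda>\<omega>. disagreement (state (choices \<omega>) k))"
proof (rule integrable_prefix_functional, rule depends_on_prefixI)
  fix c c' :: "nat \<Rightarrow> nat \<times> nat" assume "\<And>t. t < k \<Longrightarrow> c t = c' t"
  then show "disagreement (state c k) = disagreement (state c' k)"
    using depends_on_prefixD[OF state_depends_on_prefix] by metis
qed

lemma integrable_step_size_sq_sum: "integrable M (\<lambda>\<omega>. step_size_sq_sum N (choices \<omega>) k)"
  by (rule integrable_prefix_functional[OF step_size_sq_sum_depends_on_prefix])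

definition expected_disagreement :: "nat \<Rightarrow> real" where
  "expected_disagreement k = expectation (\<lambda>\<omega>. disagreement (state (choices \<omega>) k))"

definition expected_step_size_sq_sum :: "nat \<Rightarrow> real" where
  "expected_step_size_sq_sum k = expectation (\<lambda>\<omega>. step_size_sq_sum N (choices \<omega>) k)"

lemma sum_expected_step_size_sq_sum_le:
  "(\<Sum>k<n. expected_step_size_sq_sum k) \<le> N * (\<Sum>m. inverse (real m ^ 2))"
proof -
  have "(\<Sum>k<n. expected_step_size_sq_sum k) = expectation (\<lambda>\<omega>. \<Sum>k<n. step_size_sq_sum N (choices \<omega>) k)"
    unfolding expected_step_size_sq_sum_def
    by (rule Bochner_Integration.integral_sum[symmetric]) (rule integrable_step_size_sq_sum)
  also have "\<dots> \<le> expectation (\<lambda>\<omega>. N * (\<Sum>m. inverse (real m ^ 2)))"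
    by (intro integral_mono Bochner_Integration.integrable_sum integrable_step_size_sq_sum
        sum_step_size_sq_sum_le) simp
  finally show ?thesis by (simp add: prob_space)
qed

lemma expectation_averaging_gain:
  shows "integrable M (\<lambda>\<omega>. case C k \<omega> of (a, b) \<Rightarrow>
      disagreement (state (choices \<omega>) k) - averaged_disagreement (state (choices \<omega>) k) a b)"
    and "expectation (\<lambda>\<omega>. case C k \<omega> of (a, b) \<Rightarrow>
      disagreement (state (choices \<omega>) k) - averaged_disagreement (state (choices \<omega>) k) a b)
      \<ge> drop_rate * expected_disagreement k"
proof -
  let ?gain = "\<lambda>c (a, b). disagreement (state c k) - averaged_disagreement (state c k) a b"
  have dep: "depends_on_prefix k (\<lambda>c. ?gain c x)" for x
  proof (rule depends_on_prefixI)
    fix c c' :: "nat \<Rightarrow> nat \<times> nat" assume "\<And>t. t < k \<Longrightarrow> c t = c' t"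
    then have "state c k = state c' k"
      using depends_on_prefixD[OF state_depends_on_prefix] by metis
    then show "?gain c x = ?gain c' x" by (simp only:)
  qed
  note next_choice = expectation_next_choice[of k ?gain, OF dep]
  show "integrable M (\<lambda>\<omega>. ?gain (choices \<omega>) (C k \<omega>))" by (rule next_choice(1))
  have "expectation (\<lambda>\<omega>. drop_rate * disagreement (state (choices \<omega>) k))
      \<le> expectation (\<lambda>\<omega>. \<Sum>x\<in>pairs. pair_prob N EC x * ?gain (choices \<omega>) x)"
  proof (rule integral_mono[OF _ next_choice(2)])
    show "integrable M (\<lambda>\<omega>. drop_rate * disagreement (state (choices \<omega>) k))"
      using integrable_disagreement by simp
    show "drop_rate * disagreement (state (choices \<omega>) k)
        \<le> (\<Sum>x\<in>pairs. pair_prob N EC x * ?gain (choices \<omega>) x)" for \<omega>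
      using expected_averaging_drop by (simp add: case_prod_unfold)
  qed
  then show "expectation (\<lambda>\<omega>. ?gain (choices \<omega>) (C k \<omega>)) \<ge> drop_rate * expected_disagreement k"
    unfolding next_choice(3) expected_disagreement_def by simp
qed

lemma expected_disagreement_Suc_le:
  "expected_disagreement (Suc k)
    \<le> (1 - drop_rate\<^sup>2) * expected_disagreement k + noise_gain * expected_step_size_sq_sum k"
proof -
  let ?V = "\<lambda>\<omega>. disagreement (state (choices \<omega>) k)"
  let ?S = "\<lambda>\<omega>. step_size_sq_sum N (choices \<omega>) k"
  let ?D = "\<lambda>\<omega>. case C k \<omega> of (a, b) \<Rightarrow> ?V \<omega> - averaged_disagreement (state (choices \<omega>) k) a b"
  note gain = expectation_averaging_gain[of k]
  have "AE \<omega> in M. disagreement (state (choices \<omega>) (Suc k))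
      \<le> (1 + drop_rate) * (?V \<omega> - ?D \<omega>) + noise_gain * ?S \<omega>"
    using AE_C_in_S
  proof eventually_elim
    case (elim \<omega>)
    obtain a b where ab: "C k \<omega> = (a, b)" by fastforce
    then have "(a, b) \<in> pairs" using elim by metis
    then show ?case
      using disagreement_Suc_le[of "choices \<omega>" k a b] ab elim by (simp del: gossip_state.simps)
  qed
  then have "expected_disagreement (Suc k)
      \<le> expectation (\<lambda>\<omega>. (1 + drop_rate) * (?V \<omega> - ?D \<omega>) + noise_gain * ?S \<omega>)"
    unfolding expected_disagreement_def
    by (intro integral_mono_AE integrable_disagreement Bochner_Integration.integrable_add
        Bochner_Integration.integrable_mult_right Bochner_Integration.integrable_diff
        gain(1) integrable_step_size_sq_sum)
  also have "\<dots> = (1 + drop_rate) * (expected_disagreement k - expectation ?D)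
      + noise_gain * expected_step_size_sq_sum k"
    unfolding expected_disagreement_def expected_step_size_sq_sum_def
    using gain(1) integrable_disagreement integrable_step_size_sq_sum by simp
  also have "\<dots> \<le> (1 + drop_rate) * (expected_disagreement k - drop_rate * expected_disagreement k)
      + noise_gain * expected_step_size_sq_sum k"
    using gain(2) drop_rate_pos by (intro add_right_mono mult_left_mono) auto
  finally show ?thesis by (simp add: power2_eq_square algebra_simps)
qed

lemma sum_expected_disagreement_le:
  "(\<Sum>k<n. expected_disagreement k)
    \<le> (disagreement x0 + noise_gain * (N * (\<Sum>m. inverse (real m ^ 2)))) / drop_rate\<^sup>2"
proof -
  have telescope: "drop_rate\<^sup>2 * (\<Sum>k<n. expected_disagreement k) + expected_disagreement n
      \<le> expected_disagreement 0 + noise_gain * (\<Sum>k<n. expected_step_size_sq_sum k)" for n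
  proof (induction n)
    case (Suc n)
    then show ?case
      using expected_disagreement_Suc_le[of n] by (simp add: algebra_simps)
  qed simp
  have "expected_disagreement n \<ge> 0"
    unfolding expected_disagreement_def by (simp add: disagreement_nonneg)
  moreover have "expected_disagreement 0 = disagreement x0"
    unfolding expected_disagreement_def by (simp add: prob_space)
  moreover have "noise_gain * (\<Sum>k<n. expected_step_size_sq_sum k) \<le> noise_gain * (N * (\<Sum>m. inverse (real m ^ 2)))"
    by (intro mult_left_mono sum_expected_step_size_sq_sum_le noise_gain_nonneg)
  ultimately have "drop_rate\<^sup>2 * (\<Sum>k<n. expected_disagreement k)
      \<le> disagreement x0 + noise_gain * (N * (\<Sum>m. inverse (real m ^ 2)))"
    using telescope[of n] by linarith
  then show ?thesis using drop_rate_pos by (simp add: field_simps)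
qed

lemma AE_summable_disagreement: "AE \<omega> in M. summable (\<lambda>k. disagreement (state (choices \<omega>) k))"
  using sum_expected_disagreement_le unfolding expected_disagreement_def
  by (intro AE_summable_if_expectations_bounded integrable_disagreement disagreement_nonneg)

definition update_prob :: "nat \<Rightarrow> real" where
  "update_prob i = (\<Sum>(a, b)\<in>pairs. pair_prob N EC (a, b) * (if i = a \<or> i = b then 1 else 0))"

lemma update_prob_ge:
  assumes "i \<in> {1..N}"
  shows "update_prob i \<ge> 1 / (real N)\<^sup>2"
proof -
  obtain j where "EC i j" using EC_neighbour[OF assms] by blast
  then have ij: "(i, j) \<in> pairs" using assms unfolding comm_pairs_def by simp
  have "1 / (real N)\<^sup>2 \<le> pair_prob N EC (i, j)"
    by (rule pair_prob_ge[OF ij])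
  also have "\<dots> = (\<lambda>(a, b). pair_prob N EC (a, b) * (if i = a \<or> i = b then 1 else 0)) (i, j)"
    by simp
  also have "\<dots> \<le> update_prob i"
    unfolding update_prob_def
    by (rule member_le_sum[OF ij]) (auto simp: pair_prob_def finite_pairs split: prod.split)
  finally show ?thesis .
qed

lemma integrable_alpha_sq: "integrable M (\<lambda>\<omega>. (alpha (choices \<omega>) k i)\<^sup>2)"
proof (rule integrable_prefix_functional, rule depends_on_prefixI)
  fix c c' :: "nat \<Rightarrow> nat \<times> nat" assume "\<And>t. t < Suc k \<Longrightarrow> c t = c' t"
  then show "(alpha c k i)\<^sup>2 = (alpha c' k i)\<^sup>2"
    using depends_on_prefixD[OF alpha_depends_on_prefix] by metis
qed

text \<open>Whether player i updates at step k + 1 is independent of its step size at step k.\<close>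

lemma expectation_alpha_sq_next_update:
  "integrable M (\<lambda>\<omega>. if updated (choices \<omega>) i (Suc k) then (alpha (choices \<omega>) k i)\<^sup>2 else 0)"
  "expectation (\<lambda>\<omega>. if updated (choices \<omega>) i (Suc k) then (alpha (choices \<omega>) k i)\<^sup>2 else 0)
    = update_prob i * expectation (\<lambda>\<omega>. (alpha (choices \<omega>) k i)\<^sup>2)"
proof -
  let ?P = "\<lambda>c (a, b). (if i = a \<or> i = b then 1 else 0) * (alpha c k i)\<^sup>2"
  have dep: "depends_on_prefix (Suc k) (\<lambda>c. ?P c x)" for x
  proof (rule depends_on_prefixI)
    fix c c' :: "nat \<Rightarrow> nat \<times> nat" assume "\<And>t. t < Suc k \<Longrightarrow> c t = c' t"
    then have "alpha c k i = alpha c' k i"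
      using depends_on_prefixD[OF alpha_depends_on_prefix] by metis
    then show "?P c x = ?P c' x" by (simp only:)
  qed
  note next_choice = expectation_next_choice[of "Suc k" ?P, OF dep]
  have at_next: "(\<lambda>\<omega>. if updated (choices \<omega>) i (Suc k) then (alpha (choices \<omega>) k i)\<^sup>2 else 0)
      = (\<lambda>\<omega>. ?P (choices \<omega>) (C (Suc k) \<omega>))"
    unfolding updated_def by (auto simp: case_prod_unfold)
  have averaged: "(\<Sum>x\<in>pairs. pair_prob N EC x * ?P c x) = update_prob i * (alpha c k i)\<^sup>2" for c
    unfolding update_prob_def sum_distrib_right
    by (intro sum.cong refl) (auto simp: case_prod_unfold)
  show "integrable M (\<lambda>\<omega>. if updated (choices \<omega>) i (Suc k) then (alpha (choices \<omega>) k i)\<^sup>2 else 0)"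
    unfolding at_next by (rule next_choice(1))
  show "expectation (\<lambda>\<omega>. if updated (choices \<omega>) i (Suc k) then (alpha (choices \<omega>) k i)\<^sup>2 else 0)
    = update_prob i * expectation (\<lambda>\<omega>. (alpha (choices \<omega>) k i)\<^sup>2)"
    unfolding at_next next_choice(3) averaged by simp
qed

lemma sum_expected_alpha_sq_le:
  assumes "i \<in> {1..N}"
  shows "(\<Sum>k<n. expectation (\<lambda>\<omega>. (alpha (choices \<omega>) k i)\<^sup>2)) \<le> (real N)\<^sup>2 * (\<Sum>m. inverse (real m ^ 2))"
proof -
  let ?EA = "\<lambda>k. expectation (\<lambda>\<omega>. (alpha (choices \<omega>) k i)\<^sup>2)"
  let ?A = "\<lambda>k \<omega>. if updated (choices \<omega>) i (Suc k) then (alpha (choices \<omega>) k i)\<^sup>2 else 0"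
  note next_update = expectation_alpha_sq_next_update[of i]
  have "update_prob i * (\<Sum>k<n. ?EA k) = (\<Sum>k<n. expectation (?A k))"
    by (simp add: sum_distrib_left next_update(2))
  also have "\<dots> = expectation (\<lambda>\<omega>. \<Sum>k<n. ?A k \<omega>)"
    by (rule Bochner_Integration.integral_sum[symmetric]) (rule next_update(1))
  also have "\<dots> \<le> expectation (\<lambda>\<omega>. \<Sum>m. inverse (real m ^ 2))"
    by (intro integral_mono Bochner_Integration.integrable_sum next_update(1)
        sum_step_size_sq_before_update_le) simp
  finally have "update_prob i * (\<Sum>k<n. ?EA k) \<le> (\<Sum>m. inverse (real m ^ 2))"
    by (simp add: prob_space)
  moreover have "(\<Sum>k<n. ?EA k) / (real N)\<^sup>2 \<le> update_prob i * (\<Sum>k<n. ?EA k)"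
    using mult_right_mono[OF update_prob_ge[OF assms], of "\<Sum>k<n. ?EA k"] by (simp add: sum_nonneg)
  ultimately have "(\<Sum>k<n. ?EA k) / (real N)\<^sup>2 \<le> (\<Sum>m. inverse (real m ^ 2))"
    by linarith
  then show ?thesis using N_pos by (simp add: field_simps)
qed

lemma AE_summable_alpha_sq:
  assumes "i \<in> {1..N}"
  shows "AE \<omega> in M. summable (\<lambda>k. (alpha (choices \<omega>) k i)\<^sup>2)"
  using sum_expected_alpha_sq_le[OF assms]
  by (intro AE_summable_if_expectations_bounded integrable_alpha_sq) auto

abbreviation consensus_error :: "(nat \<Rightarrow> nat \<times> nat) \<Rightarrow> nat \<Rightarrow> real" where
  "consensus_error c k \<equiv> vnorm est_dim (\<lambda>p. state c k p - Zvec EI N (state c k) p)"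

lemma AE_summable_consensus_error_sq:
  "AE \<omega> in M. summable (\<lambda>k. (consensus_error (choices \<omega>) k)\<^sup>2)"
  using AE_summable_disagreement
  by eventually_elim (rule summable_comparison_test', auto simp: vnorm_sub_Zvec_le_disagreement)

lemma AE_summable_alpha_max_consensus_error:
  "AE \<omega> in M. summable (\<lambda>k. alpha_max N (choices \<omega>) k * consensus_error (choices \<omega>) k)"
proof -
  have "AE \<omega> in M. \<forall>i\<in>{1..N}. summable (\<lambda>k. (alpha (choices \<omega>) k i)\<^sup>2)"
    by (rule AE_finite_allI) (auto intro: AE_summable_alpha_sq)
  with AE_summable_consensus_error_sq show ?thesis
  proof eventually_elim
    case (elim \<omega>)
    let ?a = "\<lambda>k. alpha_max N (choices \<omega>) k" and ?e = "consensus_error (choices \<omega>)"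
    have "summable (\<lambda>k. ((\<Sum>i=1..N. (alpha (choices \<omega>) k i)\<^sup>2) + (?e k)\<^sup>2) / 2)"
      using elim by (intro summable_divide summable_add summable_sum) auto
    moreover have "norm (?a k * ?e k) \<le> ((\<Sum>i=1..N. (alpha (choices \<omega>) k i)\<^sup>2) + (?e k)\<^sup>2) / 2" for k
    proof -
      have "?a k * ?e k \<le> ((?a k)\<^sup>2 + (?e k)\<^sup>2) / 2"
        using zero_le_power2[of "?a k - ?e k"] by (simp add: power2_eq_square algebra_simps)
      then show ?thesis
        using alpha_max_sq_le[OF N_pos, of "choices \<omega>" k] vnorm_nonneg[of est_dim] by simp
    qed
    ultimately show ?case by (rule summable_comparison_test')
  qed
qed

end

theorem theorem1:
  fixes N :: nat and EI EC Gm :: "nat \<Rightarrow> nat \<Rightarrow> bool"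
    and Om :: "nat \<Rightarrow> real set"
    and J G :: "nat \<Rightarrow> real \<Rightarrow> (nat \<Rightarrow> real) \<Rightarrow> real"
    and x0 :: "nat \<Rightarrow> real"
    and M :: "'a measure" and C :: "nat \<Rightarrow> 'a \<Rightarrow> nat \<times> nat"
  assumes N2: "N \<ge> 2"
    and EI_graph: "graph_on N EI"
    and EI_conn: "connected_graph N EI"
    and EI_not_complete: "\<not> complete_graph N EI"
    and Gm_max: "max_triangle_free_spanning N EI Gm"
    and EC_graph: "graph_on N EC"
    and Gm_EC: "\<forall>i j. Gm i j \<longrightarrow> EC i j"
    and EC_EI: "\<forall>i j. EC i j \<longrightarrow> EI i j"
    and Om_ne: "\<forall>i\<in>{1..N}. Om i \<noteq> {}"
    and Om_compact: "\<forall>i\<in>{1..N}. compact (Om i)"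
    and Om_convex: "\<forall>i\<in>{1..N}. convex (Om i)"
    and J_deriv: "\<forall>i\<in>{1..N}. \<forall>x\<in>Om i. \<forall>y\<in>Dom_other EI N Om i.
                    ((\<lambda>t. J i t y) has_real_derivative G i x y) (at x within Om i)"
    and G_cont: "\<forall>i\<in>{1..N}. continuous_on (Om i \<times> Dom_other EI N Om i) (\<lambda>(x, y). G i x y)"
    and J_cont: "\<forall>i\<in>{1..N}. continuous_on (Om i \<times> Dom_other EI N Om i) (\<lambda>(x, y). J i x y)"
    and J_convex: "\<forall>i\<in>{1..N}. \<forall>y\<in>Dom_other EI N Om i. convex_on (Om i) (\<lambda>t. J i t y)"
    and x0_in: "\<forall>i\<in>{1..N}. \<forall>j\<in>nbIt EI N i. x0 (spos EI N i j) \<in> Om j"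
    and M_prob: "prob_space M"
    and C_indep: "prob_space.indep_vars M (\<lambda>_. count_space UNIV) C UNIV"
    and C_distr: "\<forall>k i j. measure M {\<omega> \<in> space M. C k \<omega> = (i, j)} =
                    (if i \<in> {1..N} \<and> EC i j then 1 / (real N * real (card {l. EC i l})) else 0)"
  shows "(AE \<omega> in M. summable (\<lambda>k. alpha_max N (\<lambda>t. C t \<omega>) k *
            vnorm (mtot EI N) (\<lambda>p. gossip_state EI N Om G x0 (\<lambda>t. C t \<omega>) k p
                                  - Zvec EI N (gossip_state EI N Om G x0 (\<lambda>t. C t \<omega>) k) p)))
       \<and> (AE \<omega> in M. summable (\<lambda>k. (vnorm (mtot EI N) (\<lambda>p. gossip_state EI N Om G x0 (\<lambda>t. C t \<omega>) k p
                                  - Zvec EI N (gossip_state EI N Om G x0 (\<lambda>t. C t \<omega>) k) p))\<^sup>2))"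
proof -
  have two_hop: "EC i j \<or> (\<exists>k. EC i k \<and> EC k j)" if "EI i j" for i j
    using max_triangle_free_two_hop[OF Gm_max EI_graph that] Gm_EC by blast
  have EC_neighbour: "\<exists>j. EC i j" if "i \<in> {1..N}" for i
    using connected_graph_has_edge[OF EI_conn N2 that] two_hop by blast
  have distr: "measure M {\<omega> \<in> space M. C k \<omega> = x} = (if x \<in> comm_pairs N EC then pair_prob N EC x else 0)"
    for k x
    using C_distr by (cases x) (simp add: comm_pairs_def pair_prob_def)
  interpret random_gossip N EI Om G x0 EC M C
    by (intro random_gossip.intro gossip_game.intro interference_graph.intro gossip_game_axioms.intro
        random_gossip_axioms.intro M_prob)
      (use N2 in \<open>simp_all add: EI_graph C_indep distr two_hop EC_neighbour EC_EI
        Om_ne Om_compact Om_convex G_cont x0_in\<close>)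
  show ?thesis
    using AE_summable_alpha_max_consensus_error AE_summable_consensus_error_sq by simp
qed

end
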